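(* Let $\alpha<\beta$ be real numbers, $T>0$, $v\in C^1(\mathbb{R})$, and let $\rho\in L^\infty(]0,T[\times]\alpha,\beta[)$ satisfy $$\int_0^T\!\!\int_\alpha^\beta\partial_t\phi\,|\rho-c|+\partial_x\phi\,\mathrm{sign}(\rho-c)[v(\rho)\rho-v(c)c]\,dx\,dt\ge0$$ for every $c\in\mathbb{R}$ and every nonnegative $\phi\in C^\infty_c(]0,T[\times]\alpha,\beta[)$. Then $$v(\rho)\rho(\cdot,\alpha^+)=-\mathrm{Tr}[v(\rho)\rho](\cdot,\alpha^+),\qquad v(\rho)\rho(\cdot,\beta^-)=\mathrm{Tr}[v(\rho)\rho](\cdot,\beta^-)\quad\text{a.e. on }]0,T[.$$
   Context: Strong traces: for $\rho$ as in the statement, with $f(\rho):=v(\rho)\rho$, there exist (Kwon–Vasseur, Panov) $\rho_\alpha,\rho_\beta\in L^\infty(]0,T[)$ such that $\operatorname{ess\,lim}_{y\to\alpha^+}\int_0^T|f(\rho)(t,y)-f(\rho_\alpha)(t)|\,dt=0$ and $\operatorname{ess\,lim}_{y\to\beta^-}\int_0^T|f(\rho)(t,y)-f(\rho_\beta)(t)|\,dt=0$; one writes $v(\rho)\rho(\cdot,\alpha^+):=f(\rho_\alpha)$ and $v(\rho)\rho(\cdot,\beta^-):=f(\rho_\beta)$. Distributional traces: taking $c$ below and above the range of $\rho$ shows $\int_0^T\!\int_\alpha^\beta\rho(\partial_t\phi+v(\rho)\partial_x\phi)\,dx\,dt=0$ for all $\phi\in C^\infty_c(]0,T[\times]\alpha,\beta[)$;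 for such functions there are unique $\mathrm{Tr}[v(\rho)\rho](\cdot,\alpha^+),\mathrm{Tr}[v(\rho)\rho](\cdot,\beta^-)\in L^\infty(]0,T[)$ and $[\rho]_0\in L^\infty(]\alpha,\beta[)$ such that $\int_0^T\!\int_\alpha^\beta\rho(\partial_t\varphi+v(\rho)\partial_x\varphi)\,dx\,dt=\int_0^T\varphi(t,\alpha)\mathrm{Tr}[v(\rho)\rho](t,\alpha^+)dt+\int_0^T\varphi(t,\beta)\mathrm{Tr}[v(\rho)\rho](t,\beta^-)dt-\int_\alpha^\beta[\rho]_0\varphi(0,\cdot)dx$ for all $\varphi\in C^\infty_c(]-\infty,T[\times\mathbb{R})$. *)

theory Defs
  imports "HOL-Analysis.Analysis"
begin

definition pdt :: "(real \<times> real \<Rightarrow> real) \<Rightarrow> real \<times> real \<Rightarrow> real" where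
  "pdt f z = deriv (\<lambda>s. f (s, snd z)) (fst z)"

definition pdx :: "(real \<times> real \<Rightarrow> real) \<Rightarrow> real \<times> real \<Rightarrow> real" where
  "pdx f z = deriv (\<lambda>y. f (fst z, y)) (snd z)"

fun pdiff :: "bool list \<Rightarrow> (real \<times> real \<Rightarrow> real) \<Rightarrow> real \<times> real \<Rightarrow> real" where
  "pdiff [] f = f"
| "pdiff (b # bs) f = (if b then pdt else pdx) (pdiff bs f)"

definition smooth2 :: "(real \<times> real \<Rightarrow> real) \<Rightarrow> bool" where
  "smooth2 f \<longleftrightarrow> (\<forall>ws z. pdiff ws f differentiable (at z))"

definition tsupport :: "(real \<times> real \<Rightarrow> real) \<Rightarrow> (real \<times> real) set" where
  "tsupport f = closure {z. f z \<noteq> 0}"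

text \<open>Test functions C-infinity with compact support in the open set U
  (extended by zero to the plane).\<close>

definition test_fun :: "(real \<times> real) set \<Rightarrow> (real \<times> real \<Rightarrow> real) \<Rightarrow> bool" where
  "test_fun U \<phi> \<longleftrightarrow> smooth2 \<phi> \<and> compact (tsupport \<phi>) \<and> tsupport \<phi> \<subseteq> U"

definition Linf_on :: "'a::euclidean_space set \<Rightarrow> ('a \<Rightarrow> real) \<Rightarrow> bool" where
  "Linf_on A g \<longleftrightarrow> g \<in> borel_measurable borel \<and>
     (\<exists>M. AE z in lborel. z \<in> A \<longrightarrow> \<bar>g z\<bar> \<le> M)"

definition entropy_sol :: "(real \<Rightarrow> real) \<Rightarrow> real \<Rightarrow> real \<Rightarrow> real \<Rightarrow> (real \<times> real \<Rightarrow> real) \<Rightarrow> bool" where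
  "entropy_sol v T a b \<rho> \<longleftrightarrow>
     (\<forall>c::real. \<forall>\<phi>. test_fun ({0<..<T} \<times> {a<..<b}) \<phi> \<and> (\<forall>z. 0 \<le> \<phi> z) \<longrightarrow>
        0 \<le> (LINT z:{0<..<T} \<times> {a<..<b}|lborel.
               pdt \<phi> z * \<bar>\<rho> z - c\<bar>
             + pdx \<phi> z * sgn (\<rho> z - c) * (v (\<rho> z) * \<rho> z - v c * c)))"

definition strong_trace_left :: "(real \<Rightarrow> real) \<Rightarrow> real \<Rightarrow> real \<Rightarrow> real \<Rightarrow> (real \<times> real \<Rightarrow> real) \<Rightarrow> (real \<Rightarrow> real) \<Rightarrow> bool" where
  "strong_trace_left v T a b \<rho> \<rho>a \<longleftrightarrow> Linf_on {0<..<T} \<rho>a \<and>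
     (\<forall>\<epsilon>>0. \<exists>\<delta>>0. AE y in lborel. a < y \<and> y < a + \<delta> \<and> y < b \<longrightarrow>
        (LINT t:{0<..<T}|lborel. \<bar>v (\<rho> (t, y)) * \<rho> (t, y) - v (\<rho>a t) * \<rho>a t\<bar>) < \<epsilon>)"

definition strong_trace_right :: "(real \<Rightarrow> real) \<Rightarrow> real \<Rightarrow> real \<Rightarrow> real \<Rightarrow> (real \<times> real \<Rightarrow> real) \<Rightarrow> (real \<Rightarrow> real) \<Rightarrow> bool" where
  "strong_trace_right v T a b \<rho> \<rho>b \<longleftrightarrow> Linf_on {0<..<T} \<rho>b \<and>
     (\<forall>\<epsilon>>0. \<exists>\<delta>>0. AE y in lborel. b - \<delta> < y \<and> y < b \<and> a < y \<longrightarrow>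
        (LINT t:{0<..<T}|lborel. \<bar>v (\<rho> (t, y)) * \<rho> (t, y) - v (\<rho>b t) * \<rho>b t\<bar>) < \<epsilon>)"

text \<open>Distributional (weak) traces Tr_a, Tr_b of v(\<rho>)\<rho> and initial trace \<rho>0.\<close>

definition weak_traces :: "(real \<Rightarrow> real) \<Rightarrow> real \<Rightarrow> real \<Rightarrow> real \<Rightarrow> (real \<times> real \<Rightarrow> real)
     \<Rightarrow> (real \<Rightarrow> real) \<Rightarrow> (real \<Rightarrow> real) \<Rightarrow> (real \<Rightarrow> real) \<Rightarrow> bool" where
  "weak_traces v T a b \<rho> Tra Trb \<rho>0 \<longleftrightarrow>
     Linf_on {0<..<T} Tra \<and> Linf_on {0<..<T} Trb \<and> Linf_on {a<..<b} \<rho>0 \<and>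
     (\<forall>\<phi>. test_fun ({..<T} \<times> UNIV) \<phi> \<longrightarrow>
        (LINT z:{0<..<T} \<times> {a<..<b}|lborel. \<rho> z * (pdt \<phi> z + v (\<rho> z) * pdx \<phi> z))
        = (LINT t:{0<..<T}|lborel. \<phi> (t, a) * Tra t)
        + (LINT t:{0<..<T}|lborel. \<phi> (t, b) * Trb t)
        - (LINT x:{a<..<b}|lborel. \<rho>0 x * \<phi> (0, x)))"

end

theory Submission
  imports Defs "HOL-Computational_Algebra.Polynomial"
begin

fun n_times_differentiable :: "nat \<Rightarrow> (real \<Rightarrow> real) \<Rightarrow> bool" where
  "n_times_differentiable 0 f \<longleftrightarrow> True"
| "n_times_differentiable (Suc n) f \<longleftrightarrow>
     (\<forall>x. f differentiable (at x)) \<and> n_times_differentiable n (deriv f)"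

definition smooth_fun :: "(real \<Rightarrow> real) \<Rightarrow> bool" where
  "smooth_fun f \<longleftrightarrow> (\<forall>n. n_times_differentiable n f)"

lemma n_times_differentiable_SucI:
  assumes "\<And>x. (f has_real_derivative f' x) (at x)" and "n_times_differentiable n f'"
  shows "n_times_differentiable (Suc n) f"
proof -
  have "deriv f = f'"
    using assms(1) by (intro ext DERIV_imp_deriv)
  then show ?thesis
    using assms real_differentiable_def by auto
qed

lemma n_times_differentiable_has_deriv:
  "n_times_differentiable (Suc n) f \<Longrightarrow> (f has_real_derivative deriv f x) (at x)"
  by (simp add: DERIV_deriv_iff_real_differentiable)

lemma n_times_differentiable_Suc_imp:
  "n_times_differentiable (Suc n) f \<Longrightarrow> n_times_differentiable n f"
  by (induction n arbitrary: f) auto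

lemma n_times_differentiable_const: "n_times_differentiable n (\<lambda>x. c)"
  by (induction n arbitrary: c) (auto intro: n_times_differentiable_SucI[OF DERIV_const])

lemma n_times_differentiable_ident: "n_times_differentiable n (\<lambda>x. x)"
  by (cases n) (auto intro: n_times_differentiable_SucI[OF DERIV_ident] n_times_differentiable_const)

lemma n_times_differentiable_add:
  "n_times_differentiable n f \<Longrightarrow> n_times_differentiable n g \<Longrightarrow>
     n_times_differentiable n (\<lambda>x. f x + g x)"
proof (induction n arbitrary: f g)
  case (Suc n)
  show ?case
    by (rule n_times_differentiable_SucI[OF DERIV_add])
       (use Suc in \<open>auto intro: n_times_differentiable_has_deriv\<close>)
qed simp

lemma n_times_differentiable_mult:
  "n_times_differentiable n f \<Longrightarrow> n_times_differentiable n g \<Longrightarrow>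
     n_times_differentiable n (\<lambda>x. f x * g x)"
proof (induction n arbitrary: f g)
  case (Suc n)
  have "((\<lambda>x. f x * g x) has_real_derivative deriv f x * g x + deriv g x * f x) (at x)" for x
    using Suc.prems by (intro DERIV_mult n_times_differentiable_has_deriv)
  moreover have "n_times_differentiable n (\<lambda>x. deriv f x * g x + deriv g x * f x)"
    using Suc.prems n_times_differentiable_Suc_imp[OF Suc.prems(1)]
      n_times_differentiable_Suc_imp[OF Suc.prems(2)]
    by (auto intro!: n_times_differentiable_add Suc.IH)
  ultimately show ?case
    by (rule n_times_differentiable_SucI)
qed simp

lemma n_times_differentiable_compose:
  "n_times_differentiable n g \<Longrightarrow> n_times_differentiable n f \<Longrightarrow>
     n_times_differentiable n (\<lambda>x. g (f x))"
proof (induction n arbitrary: g f)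
  case (Suc n)
  have "((\<lambda>x. g (f x)) has_real_derivative deriv g (f x) * deriv f x) (at x)" for x
    using n_times_differentiable_has_deriv[OF Suc.prems(1)] n_times_differentiable_has_deriv[OF Suc.prems(2)]
    by (rule DERIV_chain2)
  moreover have "n_times_differentiable n (\<lambda>x. deriv g (f x) * deriv f x)"
  proof (rule n_times_differentiable_mult)
    show "n_times_differentiable n (\<lambda>x. deriv g (f x))"
      using Suc.prems n_times_differentiable_Suc_imp[OF Suc.prems(2)] by (simp add: Suc.IH)
  qed (use Suc.prems in simp)
  ultimately show ?case
    by (rule n_times_differentiable_SucI)
qed simp

lemma n_times_differentiable_inverse:
  "n_times_differentiable n f \<Longrightarrow> (\<And>x. f x \<noteq> 0) \<Longrightarrow>
     n_times_differentiable n (\<lambda>x. inverse (f x))"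
proof (induction n arbitrary: f)
  case (Suc n)
  have "((\<lambda>x. inverse (f x)) has_real_derivative
      - deriv f x * (inverse (f x) * inverse (f x))) (at x)" for x
    using DERIV_inverse_fun[OF n_times_differentiable_has_deriv[OF Suc.prems(1)] Suc.prems(2)]
    by (simp add: power2_eq_square)
  moreover have "n_times_differentiable n (\<lambda>x. - deriv f x * (inverse (f x) * inverse (f x)))"
  proof (rule n_times_differentiable_mult)
    have "n_times_differentiable n (\<lambda>x. (-1) * deriv f x)"
      using Suc.prems by (intro n_times_differentiable_mult n_times_differentiable_const) simp
    then show "n_times_differentiable n (\<lambda>x. - deriv f x)"
      by simp
    have "n_times_differentiable n (\<lambda>x. inverse (f x))"
      by (rule Suc.IH[OF n_times_differentiable_Suc_imp[OF Suc.prems(1)] Suc.prems(2)])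
    then show "n_times_differentiable n (\<lambda>x. inverse (f x) * inverse (f x))"
      using n_times_differentiable_mult by blast
  qed
  ultimately show ?case
    by (rule n_times_differentiable_SucI)
qed simp

lemma smooth_fun_n_times_differentiable: "smooth_fun f \<Longrightarrow> n_times_differentiable n f"
  by (simp add: smooth_fun_def)

lemma smooth_fun_has_deriv: "smooth_fun f \<Longrightarrow> (f has_real_derivative deriv f x) (at x)"
  by (meson n_times_differentiable_has_deriv smooth_fun_n_times_differentiable)

lemma smooth_fun_differentiable: "smooth_fun f \<Longrightarrow> f differentiable (at x)"
  using smooth_fun_has_deriv real_differentiable_def by blast

lemma smooth_fun_continuous_on: "smooth_fun f \<Longrightarrow> continuous_on S f"
  by (meson continuous_at_imp_continuous_on differentiable_imp_continuous_within
      smooth_fun_differentiable)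

lemma smooth_fun_borel_measurable: "smooth_fun f \<Longrightarrow> f \<in> borel_measurable borel"
  by (simp add: borel_measurable_continuous_onI smooth_fun_continuous_on)

lemma smooth_fun_deriv: "smooth_fun f \<Longrightarrow> smooth_fun (deriv f)"
  unfolding smooth_fun_def by (metis n_times_differentiable.simps(2))

lemma smooth_fun_const: "smooth_fun (\<lambda>x. c)"
  by (simp add: smooth_fun_def n_times_differentiable_const)

lemma smooth_fun_ident: "smooth_fun (\<lambda>x. x)"
  by (simp add: smooth_fun_def n_times_differentiable_ident)

lemma smooth_fun_add: "smooth_fun f \<Longrightarrow> smooth_fun g \<Longrightarrow> smooth_fun (\<lambda>x. f x + g x)"
  by (simp add: smooth_fun_def n_times_differentiable_add)

lemma smooth_fun_mult: "smooth_fun f \<Longrightarrow> smooth_fun g \<Longrightarrow> smooth_fun (\<lambda>x. f x * g x)"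
  by (simp add: smooth_fun_def n_times_differentiable_mult)

lemma smooth_fun_compose: "smooth_fun g \<Longrightarrow> smooth_fun f \<Longrightarrow> smooth_fun (\<lambda>x. g (f x))"
  by (simp add: smooth_fun_def n_times_differentiable_compose)

lemma smooth_fun_inverse:
  "smooth_fun f \<Longrightarrow> (\<And>x. f x \<noteq> 0) \<Longrightarrow> smooth_fun (\<lambda>x. inverse (f x))"
  by (simp add: smooth_fun_def n_times_differentiable_inverse)

lemma smooth_fun_affine: "smooth_fun (\<lambda>x. a * x + b)"
  by (intro smooth_fun_add smooth_fun_mult smooth_fun_const smooth_fun_ident)

lemma deriv_eq_0_if_constant_on_open:
  fixes f :: "real \<Rightarrow> real"
  assumes "open S" "x \<in> S" "\<And>y. y \<in> S \<Longrightarrow> f y = c"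
  shows "deriv f x = 0"
proof -
  have "deriv f x = deriv (\<lambda>y. c) x"
    by (rule deriv_cong_ev) (use assms in \<open>auto simp: eventually_nhds\<close>)
  then show ?thesis
    by simp
qed

lemma bounded_if_continuous_vanishing_outside:
  fixes g :: "real \<Rightarrow> real"
  assumes "continuous_on UNIV g" "\<And>x. x \<notin> {c..d} \<Longrightarrow> g x = 0"
  obtains B where "\<And>x. \<bar>g x\<bar> \<le> B"
proof -
  obtain B where "\<And>x. x \<in> {c..d} \<Longrightarrow> norm (g x) \<le> B" "0 \<le> B"
    by (rule continuous_on_compact_bound[OF compact_Icc continuous_on_subset[OF assms(1)]]) auto
  then have "\<bar>g x\<bar> \<le> B" for x
    using assms(2)[of x] by (cases "x \<in> {c..d}") auto
  then show thesis
    by (rule that)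
qed

lemma deriv_vanishing_outside:
  fixes f :: "real \<Rightarrow> real"
  assumes "\<And>x. x \<notin> {c..d} \<Longrightarrow> f x = 0" "x \<notin> {c..d}"
  shows "deriv f x = 0"
  using assms by (intro deriv_eq_0_if_constant_on_open[of "- {c..d}"]) auto

lemma smooth_fun_bounds:
  assumes "smooth_fun \<psi>" "\<And>t. t \<notin> {c..d} \<Longrightarrow> \<psi> t = 0"
  obtains \<Psi>0 \<Psi>1 where "\<And>t. \<bar>\<psi> t\<bar> \<le> \<Psi>0" "\<And>t. \<bar>deriv \<psi> t\<bar> \<le> \<Psi>1"
proof -
  obtain \<Psi>0 where "\<And>t. \<bar>\<psi> t\<bar> \<le> \<Psi>0"
    using bounded_if_continuous_vanishing_outside[OF smooth_fun_continuous_on[OF assms(1)] assms(2)] by blast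
  moreover have "deriv \<psi> t = 0" if "t \<notin> {c..d}" for t
    using assms(2) that by (rule deriv_vanishing_outside)
  then obtain \<Psi>1 where "\<And>t. \<bar>deriv \<psi> t\<bar> \<le> \<Psi>1"
    using bounded_if_continuous_vanishing_outside[OF smooth_fun_continuous_on[OF smooth_fun_deriv[OF assms(1)]]]
    by blast
  ultimately show thesis
    by (rule that)
qed

lemma poly_times_exp_neg_tendsto_0: "((\<lambda>s. poly p s * exp (- s)) \<longlongrightarrow> (0 :: real)) at_top"
proof -
  have "((\<lambda>s. \<Sum>i\<le>degree p. coeff p i * (s ^ i / exp s)) \<longlongrightarrow> 0) at_top"
    by (intro tendsto_null_sum tendsto_mult_right_zero tendsto_power_div_exp_0)
  then show ?thesis
    by (simp add: poly_altdef sum_divide_distrib exp_minus field_simps)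
qed

definition poly_exp_inv :: "real poly \<Rightarrow> real \<Rightarrow> real" where
  "poly_exp_inv p x = (if 0 < x then poly p (inverse x) * exp (- inverse x) else 0)"

lemma poly_exp_inv_has_real_derivative:
  "(poly_exp_inv p has_real_derivative poly_exp_inv (monom 1 2 * (p - pderiv p)) x) (at x)"
proof -
  consider "x < 0" | "x = 0" | "0 < x"
    by linarith
  then show ?thesis
  proof cases
    case 1
    have "((\<lambda>y. 0) has_real_derivative poly_exp_inv (monom 1 2 * (p - pderiv p)) x) (at x)"
      using 1 by (simp add: poly_exp_inv_def)
    then show ?thesis
      by (rule has_field_derivative_transform_within_open[where S = "{..<0}"])
         (use 1 in \<open>auto simp: poly_exp_inv_def\<close>)
  next
    case 2
    have "((\<lambda>y. poly_exp_inv p y / y) \<longlongrightarrow> 0) (at_right 0)"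
    proof (rule Lim_transform_eventually)
      show "((\<lambda>y. poly (pCons 0 p) (inverse y) * exp (- inverse y)) \<longlongrightarrow> 0) (at_right 0)"
        by (rule filterlim_compose[OF poly_times_exp_neg_tendsto_0 filterlim_inverse_at_top_right])
      show "\<forall>\<^sub>F y in at_right 0. poly (pCons 0 p) (inverse y) * exp (- inverse y) = poly_exp_inv p y / y"
        using eventually_at_right_less[of "0::real"]
        by eventually_elim (simp add: poly_exp_inv_def divide_inverse)
    qed
    moreover have "((\<lambda>y. poly_exp_inv p y / y) \<longlongrightarrow> 0) (at_left 0)"
      by (rule Lim_transform_eventually[OF tendsto_const])
         (use eventually_at_left_real[of "-1" "0::real"] in \<open>auto elim: eventually_mono simp: poly_exp_inv_def\<close>)
    ultimately have "((\<lambda>y. (poly_exp_inv p y - poly_exp_inv p 0) / (y - 0)) \<longlongrightarrow> 0) (at 0)"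
      using filterlim_split_at by (force simp: poly_exp_inv_def)
    then show ?thesis
      using 2 by (simp add: has_field_derivative_iff poly_exp_inv_def)
  next
    case 3
    have "((\<lambda>y. poly p (inverse y) * exp (- inverse y)) has_real_derivative
        poly_exp_inv (monom 1 2 * (p - pderiv p)) x) (at x)"
      using 3
      by (auto intro!: derivative_eq_intros DERIV_chain2[OF poly_DERIV]
          simp: poly_exp_inv_def poly_monom power2_eq_square algebra_simps)
    then show ?thesis
      by (rule has_field_derivative_transform_within_open[where S = "{0<..}"])
         (use 3 in \<open>auto simp: poly_exp_inv_def\<close>)
  qed
qed

lemma smooth_fun_poly_exp_inv: "smooth_fun (poly_exp_inv p)"
proof -
  have "n_times_differentiable n (poly_exp_inv p)" for n
  proof (induction n arbitrary: p)
    case (Suc n)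
    show ?case
      by (rule n_times_differentiable_SucI[OF poly_exp_inv_has_real_derivative Suc.IH])
  qed simp
  then show ?thesis
    by (simp add: smooth_fun_def)
qed

definition smooth_step :: "real \<Rightarrow> real" where
  "smooth_step x = poly_exp_inv 1 (1 - x) / (poly_exp_inv 1 (1 - x) + poly_exp_inv 1 x)"

lemma smooth_step_denominator_pos: "0 < poly_exp_inv 1 (1 - x) + poly_exp_inv 1 x"
  by (cases "0 < x") (auto simp: poly_exp_inv_def add_pos_nonneg add_nonneg_pos)

lemma smooth_fun_smooth_step: "smooth_fun smooth_step"
proof -
  have h: "smooth_fun (\<lambda>x. poly_exp_inv 1 ((-1) * x + 1))"
    by (intro smooth_fun_compose[OF smooth_fun_poly_exp_inv] smooth_fun_affine)
  have "smooth_fun (\<lambda>x. poly_exp_inv 1 ((-1) * x + 1) *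
      inverse (poly_exp_inv 1 ((-1) * x + 1) + poly_exp_inv 1 x))"
    using smooth_step_denominator_pos
    by (intro smooth_fun_mult h smooth_fun_inverse smooth_fun_add smooth_fun_poly_exp_inv)
       (metis add.commute less_irrefl mult_minus1 uminus_add_conv_diff)
  then show ?thesis
    by (simp add: smooth_step_def[abs_def] divide_inverse)
qed

lemma smooth_step_nonpos: "x \<le> 0 \<Longrightarrow> smooth_step x = 1"
  using smooth_step_denominator_pos[of x] by (simp add: smooth_step_def poly_exp_inv_def)

lemma smooth_step_ge_1: "1 \<le> x \<Longrightarrow> smooth_step x = 0"
  by (simp add: smooth_step_def poly_exp_inv_def)

lemma smooth_step_bounds: "0 \<le> smooth_step x" "smooth_step x \<le> 1"
  using smooth_step_denominator_pos[of x]
  by (auto simp: smooth_step_def poly_exp_inv_def field_simps)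

lemma smooth_step_deriv_bounded: "\<exists>C. 0 < C \<and> (\<forall>x. \<bar>deriv smooth_step x\<bar> \<le> C)"
proof -
  obtain B where B: "\<And>x. x \<in> {0..1} \<Longrightarrow> \<bar>deriv smooth_step x\<bar> \<le> B"
    using continuous_on_compact_bound[OF compact_Icc smooth_fun_continuous_on]
      smooth_fun_deriv[OF smooth_fun_smooth_step] by (metis real_norm_def)
  have "deriv smooth_step x = 0" if "x \<notin> {0..1}" for x
  proof (cases "x < 0")
    case True
    then show ?thesis
      by (intro deriv_eq_0_if_constant_on_open[of "{..<0}" _ _ 1]) (auto intro: smooth_step_nonpos)
  next
    case False
    with that show ?thesis
      by (intro deriv_eq_0_if_constant_on_open[of "{1<..}" _ _ 0]) (auto intro: smooth_step_ge_1)
  qed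
  then have "\<bar>deriv smooth_step x\<bar> \<le> max B 1" for x
    using B[of x] by (cases "x \<in> {0..1}") auto
  then show ?thesis
    by (intro exI[of _ "max B 1"]) auto
qed

definition plateau :: "real \<Rightarrow> real \<Rightarrow> real \<Rightarrow> real \<Rightarrow> real" where
  "plateau a b \<epsilon> x = smooth_step ((a - x) / \<epsilon>) * smooth_step ((x - b) / \<epsilon>)"

lemma smooth_fun_plateau: "smooth_fun (plateau a b \<epsilon>)"
proof -
  have "smooth_fun (\<lambda>x. smooth_step ((- 1 / \<epsilon>) * x + a / \<epsilon>) * smooth_step ((1 / \<epsilon>) * x + - b / \<epsilon>))"
    by (intro smooth_fun_mult smooth_fun_compose[OF smooth_fun_smooth_step] smooth_fun_affine)
  then show ?thesis
    by (simp add: plateau_def[abs_def] diff_divide_distrib)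
qed

lemma plateau_bounds: "0 \<le> plateau a b \<epsilon> x" "plateau a b \<epsilon> x \<le> 1"
  using smooth_step_bounds by (auto simp: plateau_def intro: mult_le_one)

lemma plateau_eq_1: "0 < \<epsilon> \<Longrightarrow> a \<le> x \<Longrightarrow> x \<le> b \<Longrightarrow> plateau a b \<epsilon> x = 1"
  by (simp add: plateau_def smooth_step_nonpos divide_nonpos_pos)

lemma plateau_eq_0: "0 < \<epsilon> \<Longrightarrow> x \<le> a - \<epsilon> \<or> b + \<epsilon> \<le> x \<Longrightarrow> plateau a b \<epsilon> x = 0"
  by (auto simp: plateau_def smooth_step_ge_1 field_simps)

lemma plateau_vanishing_right:
  "0 < \<epsilon> \<Longrightarrow> b + \<epsilon> < x \<Longrightarrow> plateau a b \<epsilon> x = 0 \<and> deriv (plateau a b \<epsilon>) x = 0"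
  by (auto intro!: plateau_eq_0 deriv_eq_0_if_constant_on_open[of "{b + \<epsilon><..}" _ _ 0])

lemma plateau_vanishing_left:
  "0 < \<epsilon> \<Longrightarrow> x < a - \<epsilon> \<Longrightarrow> plateau a b \<epsilon> x = 0 \<and> deriv (plateau a b \<epsilon>) x = 0"
  by (auto intro!: plateau_eq_0 deriv_eq_0_if_constant_on_open[of "{..<a - \<epsilon>}" _ _ 0])

lemma plateau_deriv_bounded:
  "\<exists>C>0. \<forall>a b \<epsilon> x. 0 < \<epsilon> \<longrightarrow> \<bar>deriv (plateau a b \<epsilon>) x\<bar> \<le> C / \<epsilon>"
proof -
  obtain C where C: "0 < C" "\<And>x. \<bar>deriv smooth_step x\<bar> \<le> C"
    using smooth_step_deriv_bounded by blast
  have "\<bar>deriv (plateau a b \<epsilon>) x\<bar> \<le> 2 * C / \<epsilon>" if "0 < \<epsilon>" for a b \<epsilon> x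
  proof -
    define u where "u = (a - x) / \<epsilon>"
    define w where "w = (x - b) / \<epsilon>"
    have "(plateau a b \<epsilon> has_real_derivative
        deriv smooth_step u * (- 1 / \<epsilon>) * smooth_step w + deriv smooth_step w * (1 / \<epsilon>) * smooth_step u) (at x)"
      unfolding plateau_def[abs_def] u_def w_def
      by (intro DERIV_mult DERIV_chain2[OF smooth_fun_has_deriv[OF smooth_fun_smooth_step]])
         (use that in \<open>auto intro!: derivative_eq_intros\<close>)
    then have "deriv (plateau a b \<epsilon>) x =
        (smooth_step u * deriv smooth_step w - deriv smooth_step u * smooth_step w) / \<epsilon>"
      by (simp add: DERIV_imp_deriv diff_divide_distrib mult.commute)
    then have "\<bar>deriv (plateau a b \<epsilon>) x\<bar> =
        \<bar>smooth_step u * deriv smooth_step w - deriv smooth_step u * smooth_step w\<bar> / \<epsilon>"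
      using that by simp
    also have "\<dots> \<le> (C + C) / \<epsilon>"
    proof (intro divide_right_mono order.trans[OF abs_triangle_ineq4] add_mono)
      show "\<bar>smooth_step u * deriv smooth_step w\<bar> \<le> C" "\<bar>deriv smooth_step u * smooth_step w\<bar> \<le> C"
        using C(2)[of u] C(2)[of w] smooth_step_bounds[of u] smooth_step_bounds[of w]
          mult_left_le_one_le[of "\<bar>deriv smooth_step w\<bar>" "smooth_step u"]
          mult_right_le_one_le[of "\<bar>deriv smooth_step u\<bar>" "smooth_step w"]
        by (auto simp: abs_mult)
    qed (use that in simp)
    finally show ?thesis
      by simp
  qed
  then show ?thesis
    by (intro exI[of _ "2 * C"]) (use C in auto)
qed

lemma plateau_tendsto_indicator:
  fixes c d t :: real
  defines "h \<equiv> \<lambda>n. 1 / real (Suc n)"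
  shows "(\<lambda>n. plateau (c + 2 * h n) (d - 2 * h n) (h n) t) \<longlonglongrightarrow> indicator {c<..<d} t"
proof (cases "t \<in> {c<..<d}")
  case True
  have lim: "(\<lambda>n. 2 * h n) \<longlonglongrightarrow> 0"
    unfolding h_def using LIMSEQ_Suc[OF lim_const_over_n[of 2]] by simp
  have "eventually (\<lambda>n. 2 * h n < t - c \<and> 2 * h n < d - t) sequentially"
    using True by (intro eventually_conj order_tendstoD(2)[OF lim]) auto
  then have "eventually (\<lambda>n. plateau (c + 2 * h n) (d - 2 * h n) (h n) t = 1) sequentially"
    by eventually_elim (auto simp: h_def intro: plateau_eq_1)
  with True show ?thesis
    by (simp add: tendsto_eventually)
next
  case False
  have h_pos: "0 < h n" for n
    by (simp add: h_def)
  have "plateau (c + 2 * h n) (d - 2 * h n) (h n) t = 0" for n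
    using False h_pos[of n] by (intro plateau_eq_0) auto
  with False show ?thesis
    by simp
qed

definition tensor :: "(real \<Rightarrow> real) \<Rightarrow> (real \<Rightarrow> real) \<Rightarrow> real \<times> real \<Rightarrow> real" where
  "tensor \<psi> \<theta> z = \<psi> (fst z) * \<theta> (snd z)"

lemma pdt_tensor:
  assumes "smooth_fun \<psi>"
  shows "pdt (tensor \<psi> \<theta>) = tensor (deriv \<psi>) \<theta>"
proof
  fix z :: "real \<times> real"
  show "pdt (tensor \<psi> \<theta>) z = tensor (deriv \<psi>) \<theta> z"
    unfolding pdt_def tensor_def fst_conv snd_conv
    by (intro DERIV_imp_deriv DERIV_cmult_right smooth_fun_has_deriv assms)
qed

lemma pdx_tensor:
  assumes "smooth_fun \<theta>"
  shows "pdx (tensor \<psi> \<theta>) = tensor \<psi> (deriv \<theta>)"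
proof
  fix z :: "real \<times> real"
  show "pdx (tensor \<psi> \<theta>) z = tensor \<psi> (deriv \<theta>) z"
    unfolding pdx_def tensor_def fst_conv snd_conv
    by (intro DERIV_imp_deriv DERIV_cmult smooth_fun_has_deriv assms)
qed

lemma pdiff_tensor:
  assumes "smooth_fun \<psi>" "smooth_fun \<theta>"
  shows "\<exists>\<psi>' \<theta>'. smooth_fun \<psi>' \<and> smooth_fun \<theta>' \<and> pdiff ws (tensor \<psi> \<theta>) = tensor \<psi>' \<theta>'"
proof (induction ws)
  case Nil
  then show ?case
    using assms by auto
next
  case (Cons b ws)
  then obtain \<psi>' \<theta>' where ih: "smooth_fun \<psi>'" "smooth_fun \<theta>'" "pdiff ws (tensor \<psi> \<theta>) = tensor \<psi>' \<theta>'"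
    by blast
  show ?case
  proof (cases b)
    case True
    then show ?thesis
      using ih by (intro exI[of _ "deriv \<psi>'"] exI[of _ \<theta>']) (simp add: pdt_tensor smooth_fun_deriv)
  next
    case False
    then show ?thesis
      using ih by (intro exI[of _ \<psi>'] exI[of _ "deriv \<theta>'"]) (simp add: pdx_tensor smooth_fun_deriv)
  qed
qed

lemma tensor_differentiable:
  assumes "smooth_fun \<psi>" "smooth_fun \<theta>"
  shows "tensor \<psi> \<theta> differentiable (at z)"
proof -
  have "(\<lambda>z. \<psi> (fst z)) differentiable (at z)"
    by (rule differentiable_compose[of \<psi>, OF smooth_fun_differentiable[OF assms(1)]])
       (simp add: bounded_linear_imp_differentiable bounded_linear_fst)
  moreover have "(\<lambda>z. \<theta> (snd z)) differentiable (at z)"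
    by (rule differentiable_compose[of \<theta>, OF smooth_fun_differentiable[OF assms(2)]])
       (simp add: bounded_linear_imp_differentiable bounded_linear_snd)
  ultimately show ?thesis
    unfolding tensor_def by (rule differentiable_mult)
qed


lemma test_fun_tensor:
  assumes "smooth_fun \<psi>" "smooth_fun \<theta>"
    and "\<And>t. t \<notin> {c..d} \<Longrightarrow> \<psi> t = 0" "\<And>x. x \<notin> {e..f} \<Longrightarrow> \<theta> x = 0"
    and "{c..d} \<times> {e..f} \<subseteq> U"
  shows "test_fun U (tensor \<psi> \<theta>)"
proof -
  have support: "{z. tensor \<psi> \<theta> z \<noteq> 0} \<subseteq> {c..d} \<times> {e..f}"
    using assms(3,4) by (force simp: tensor_def)
  then have "tsupport (tensor \<psi> \<theta>) \<subseteq> {c..d} \<times> {e..f}"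
    unfolding tsupport_def by (intro closure_minimal closed_Times closed_atLeastAtMost)
  moreover have "compact (tsupport (tensor \<psi> \<theta>))"
    unfolding tsupport_def using support
    by (metis bounded_subset compact_Icc compact_Times compact_closure compact_imp_bounded)
  moreover have "smooth2 (tensor \<psi> \<theta>)"
    unfolding smooth2_def
  proof (intro allI)
    fix ws z
    obtain \<psi>' \<theta>' where "smooth_fun \<psi>'" "smooth_fun \<theta>'" "pdiff ws (tensor \<psi> \<theta>) = tensor \<psi>' \<theta>'"
      using pdiff_tensor[OF assms(1,2)] by blast
    then show "pdiff ws (tensor \<psi> \<theta>) differentiable (at z)"
      by (simp add: tensor_differentiable)
  qed
  ultimately show ?thesis
    unfolding test_fun_def using assms(5) by blast
qed

lemma set_integrable_bounded:
  fixes g :: "'a \<Rightarrow> real"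
  assumes "A \<in> sets M" "emeasure M A < \<infinity>" "g \<in> borel_measurable M"
    and "AE x in M. x \<in> A \<longrightarrow> \<bar>g x\<bar> \<le> K"
  shows "set_integrable M A g"
  unfolding set_integrable_def using assms by (intro integrableI_bounded_set_indicator) auto

lemma Linf_on_bound:
  assumes "Linf_on A g"
  obtains M where "AE z in lborel. z \<in> A \<longrightarrow> \<bar>g z\<bar> \<le> M" "0 \<le> M"
proof -
  obtain M where "AE z in lborel. z \<in> A \<longrightarrow> \<bar>g z\<bar> \<le> M"
    using assms unfolding Linf_on_def by blast
  then have "AE z in lborel. z \<in> A \<longrightarrow> \<bar>g z\<bar> \<le> \<bar>M\<bar>"
    by eventually_elim auto
  then show thesis
    by (rule that) simp
qed

lemma Linf_on_compose:
  fixes g :: "'a::euclidean_space \<Rightarrow> real"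
  assumes f: "continuous_on UNIV f" and g: "Linf_on A g"
  shows "Linf_on A (\<lambda>x. f (g x))"
proof -
  obtain M where M: "AE z in lborel. z \<in> A \<longrightarrow> \<bar>g z\<bar> \<le> M" and [measurable]: "g \<in> borel_measurable borel"
    using g unfolding Linf_on_def by blast
  obtain F where F: "\<And>u. u \<in> {-M..M} \<Longrightarrow> norm (f u) \<le> F"
    using continuous_on_compact_bound[OF compact_Icc continuous_on_subset[OF f]] by blast
  have [measurable]: "f \<in> borel_measurable borel"
    by (rule borel_measurable_continuous_onI[OF f])
  have "AE z in lborel. z \<in> A \<longrightarrow> \<bar>f (g z)\<bar> \<le> F"
    using M by eventually_elim (use F in \<open>auto simp: abs_le_iff\<close>)
  moreover have "(\<lambda>x. f (g x)) \<in> borel_measurable borel"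
    by measurable
  ultimately show ?thesis
    unfolding Linf_on_def by blast
qed

lemma Linf_on_set_integrable:
  fixes g :: "'a::euclidean_space \<Rightarrow> real"
  assumes "Linf_on A g" "A \<in> sets lborel" "emeasure lborel A < \<infinity>"
  shows "set_integrable lborel A g"
  using assms unfolding Linf_on_def by (auto intro: set_integrable_bounded)

lemma set_integrable_mult_bounded:
  fixes g \<psi> :: "real \<Rightarrow> real"
  assumes "set_integrable lborel A g" "\<psi> \<in> borel_measurable borel" "\<And>t. \<bar>\<psi> t\<bar> \<le> B"
  shows "set_integrable lborel A (\<lambda>t. \<psi> t * g t)"
proof -
  have g: "integrable lborel (\<lambda>t. indicator A t * g t)"
    using assms(1) by (simp add: set_integrable_def)
  have "integrable lborel (\<lambda>t. \<psi> t * (indicator A t * g t))"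
  proof (rule Bochner_Integration.integrable_bound[OF integrable_mult_right[OF g, of B]])
    show "(\<lambda>t. \<psi> t * (indicator A t * g t)) \<in> borel_measurable lborel"
      using assms(2) g by measurable
    show "AE t in lborel. norm (\<psi> t * (indicator A t * g t)) \<le> norm (B * (indicator A t * g t))"
      using assms(3) by (intro AE_I2) (simp add: abs_mult mult_right_mono order.trans[OF _ abs_ge_self])
  qed
  then show ?thesis
    by (simp add: set_integrable_def mult_ac)
qed

lemma emeasure_density_Ioi:
  fixes h :: "real \<Rightarrow> real"
  assumes "integrable lborel h" "\<And>t. 0 \<le> h t"
  shows "emeasure (density lborel h) {x<..} = ennreal (LINT t:{x<..}|lborel. h t)"
proof -
  have [measurable]: "h \<in> borel_measurable borel"
    using assms(1) by simp
  have "emeasure (density lborel h) {x<..} = (\<integral>\<^sup>+t. ennreal (indicator {x<..} t * h t) \<partial>lborel)"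
    by (subst emeasure_density) (auto intro!: nn_integral_cong split: split_indicator)
  also have "\<dots> = ennreal (LINT t:{x<..}|lborel. h t)"
    using assms integrable_mult_indicator[OF _ assms(1), of "{x<..}"]
    by (subst nn_integral_eq_integral) (auto simp: set_lebesgue_integral_def)
  finally show ?thesis .
qed

lemma AE_eq_0_if_integral_Ioi_eq_0:
  fixes G :: "real \<Rightarrow> real"
  assumes G: "integrable lborel G" and zero: "\<And>x. (LINT t:{x<..}|lborel. G t) = 0"
  shows "AE t in lborel. G t = 0"
proof -
  define Gp where "Gp t = max 0 (G t)" for t
  define Gn where "Gn t = max 0 (- G t)" for t
  have int: "integrable lborel Gp" "integrable lborel Gn"
    using G by (auto simp: Gp_def[abs_def] Gn_def[abs_def])
  have [measurable]: "Gp \<in> borel_measurable borel" "Gn \<in> borel_measurable borel"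
    using int by auto
  have "set_integrable lborel {x<..} Gp" "set_integrable lborel {x<..} Gn" for x
    using integrable_mult_indicator[OF _ int(1), of "{x<..}"] integrable_mult_indicator[OF _ int(2), of "{x<..}"]
    by (auto simp: set_integrable_def)
  then have "(LINT t:{x<..}|lborel. Gp t) - (LINT t:{x<..}|lborel. Gn t) = (LINT t:{x<..}|lborel. G t)" for x
  proof (subst set_integral_diff(2)[symmetric])
    show "(LINT t:{x<..}|lborel. Gp t - Gn t) = (LINT t:{x<..}|lborel. G t)"
      by (rule arg_cong[where f = "set_lebesgue_integral lborel {x<..}"]) (auto simp: Gp_def Gn_def)
  qed
  moreover have nonneg: "\<And>t. 0 \<le> Gp t" "\<And>t. 0 \<le> Gn t"
    by (simp_all add: Gp_def Gn_def)
  ultimately have "emeasure (density lborel Gp) {x<..} = emeasure (density lborel Gn) {x<..}" for x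
    using zero[of x] by (simp add: emeasure_density_Ioi int nonneg) (metis eq_iff_diff_eq_0)
  then have "density lborel Gp = density lborel Gn"
    by (intro measure_eqI_lessThan) (simp_all add: emeasure_density_Ioi int nonneg)
  then have "AE t in lborel. ennreal (Gp t) = ennreal (Gn t)"
    by (subst sigma_finite_measure.density_unique_iff[OF sigma_finite_lborel, symmetric]) simp_all
  then show ?thesis
    by eventually_elim (auto simp: Gp_def Gn_def max_def split: if_splits)
qed

lemma AE_eq_0_if_smooth_integrals_eq_0:
  fixes g :: "real \<Rightarrow> real"
  assumes g: "set_integrable lborel {a<..<b} g"
    and orth: "\<And>\<psi> c d. smooth_fun \<psi> \<Longrightarrow> a < c \<Longrightarrow> d < b \<Longrightarrow> (\<And>t. t \<notin> {c..d} \<Longrightarrow> \<psi> t = 0) \<Longrightarrow>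
        (LINT t:{a<..<b}|lborel. \<psi> t * g t) = 0"
  shows "AE t in lborel. t \<in> {a<..<b} \<longrightarrow> g t = 0"
proof -
  define G where "G t = indicator {a<..<b} t * g t" for t
  have G: "integrable lborel G"
    using g by (simp add: set_integrable_def G_def[abs_def])
  then have [measurable]: "G \<in> borel_measurable borel"
    by simp
  have interval: "(LINT t:{c<..<d}|lborel. G t) = 0" if "a \<le> c" "d \<le> b" for c d
  proof -
    define h where "h n = 1 / real (Suc n)" for n
    define \<psi> where "\<psi> n = plateau (c + 2 * h n) (d - 2 * h n) (h n)" for n
    have [measurable]: "\<psi> n \<in> borel_measurable borel" for n
      unfolding \<psi>_def by (intro borel_measurable_continuous_onI smooth_fun_continuous_on smooth_fun_plateau)
    have "(\<lambda>n. \<integral>t. \<psi> n t * G t \<partial>lborel) \<longlonglongrightarrow> (\<integral>t. indicator {c<..<d} t * G t \<partial>lborel)"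
    proof (rule integral_dominated_convergence[where w = "\<lambda>t. \<bar>G t\<bar>"])
      show "AE t in lborel. (\<lambda>n. \<psi> n t * G t) \<longlonglongrightarrow> indicator {c<..<d} t * G t"
        unfolding \<psi>_def h_def by (intro AE_I2 tendsto_mult_right plateau_tendsto_indicator)
      show "AE t in lborel. norm (\<psi> n t * G t) \<le> \<bar>G t\<bar>" for n
        using plateau_bounds by (intro AE_I2) (auto simp: \<psi>_def abs_mult intro: mult_left_le_one_le)
    qed (use G in auto)
    moreover have "(\<integral>t. \<psi> n t * G t \<partial>lborel) = 0" for n
    proof -
      have "0 < h n"
        by (simp add: h_def)
      then have "(LINT t:{a<..<b}|lborel. \<psi> n t * g t) = 0"
        using that unfolding \<psi>_def
        by (intro orth[OF smooth_fun_plateau, of "c + h n" "d - h n"] plateau_eq_0) auto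
      then show ?thesis
        by (simp add: set_lebesgue_integral_def G_def mult.left_commute)
    qed
    ultimately show ?thesis
      by (simp add: set_lebesgue_integral_def LIMSEQ_const_iff)
  qed
  have "(LINT t:{x<..}|lborel. G t) = 0" for x
  proof (cases "max x a < b")
    case True
    have "(LINT t:{x<..}|lborel. G t) = (LINT t:{max x a<..<b}|lborel. G t)"
      unfolding set_lebesgue_integral_def
      by (rule Bochner_Integration.integral_cong) (auto simp: G_def split: split_indicator)
    then show ?thesis
      using interval[of "max x a" b] by simp
  next
    case False
    then have "(\<lambda>t. indicator {x<..} t * G t) = (\<lambda>t. 0)"
      by (auto simp: G_def split: split_indicator)
    then show ?thesis
      by (simp add: set_lebesgue_integral_def)
  qed
  then have "AE t in lborel. G t = 0"
    by (rule AE_eq_0_if_integral_Ioi_eq_0[OF G])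
  then show ?thesis
    by eventually_elim (auto simp: G_def)
qed

lemma AE_eq_if_smooth_integrals_eq:
  fixes g1 g2 :: "real \<Rightarrow> real"
  assumes g: "set_integrable lborel {a<..<b} g1" "set_integrable lborel {a<..<b} g2"
    and eq: "\<And>\<psi> c d. smooth_fun \<psi> \<Longrightarrow> a < c \<Longrightarrow> d < b \<Longrightarrow> (\<And>t. t \<notin> {c..d} \<Longrightarrow> \<psi> t = 0) \<Longrightarrow>
        (LINT t:{a<..<b}|lborel. \<psi> t * g1 t) = (LINT t:{a<..<b}|lborel. \<psi> t * g2 t)"
  shows "AE t in lborel. t \<in> {a<..<b} \<longrightarrow> g1 t = g2 t"
proof -
  have "AE t in lborel. t \<in> {a<..<b} \<longrightarrow> g1 t - g2 t = 0"
  proof (rule AE_eq_0_if_smooth_integrals_eq_0)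
    show "set_integrable lborel {a<..<b} (\<lambda>t. g1 t - g2 t)"
      using g by (rule set_integral_diff(1))
    fix \<psi> c d
    assume \<psi>: "smooth_fun \<psi>" "a < c" "d < b" "\<And>t. t \<notin> {c..d} \<Longrightarrow> \<psi> t = 0"
    obtain B where "\<And>t. \<bar>\<psi> t\<bar> \<le> B"
      using bounded_if_continuous_vanishing_outside[OF smooth_fun_continuous_on[OF \<psi>(1)] \<psi>(4)] by blast
    moreover have "\<psi> \<in> borel_measurable borel"
      by (rule borel_measurable_continuous_onI[OF smooth_fun_continuous_on[OF \<psi>(1)]])
    ultimately have "set_integrable lborel {a<..<b} (\<lambda>t. \<psi> t * g1 t)" "set_integrable lborel {a<..<b} (\<lambda>t. \<psi> t * g2 t)"
      using set_integrable_mult_bounded g by blast+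
    then show "(LINT t:{a<..<b}|lborel. \<psi> t * (g1 t - g2 t)) = 0"
      using eq[OF \<psi>] by (simp add: right_diff_distrib set_integral_diff(2))
  qed
  then show ?thesis
    by simp
qed

lemma set_integral_deriv_Ioo:
  fixes \<theta> :: "real \<Rightarrow> real"
  assumes "smooth_fun \<theta>" "a \<le> b"
  shows "(LINT x:{a<..<b}|lborel. deriv \<theta> x) = \<theta> b - \<theta> a"
proof -
  have "(LBINT x=a..b. deriv \<theta> x) = \<theta> b - \<theta> a"
    using assms
    by (intro interval_integral_FTC_finite smooth_fun_continuous_on smooth_fun_deriv)
       (auto intro: has_field_derivative_at_within smooth_fun_has_deriv simp: has_real_derivative_iff_has_vector_derivative[symmetric])
  then show ?thesis
    using assms(2) by (simp add: interval_integral_Ioo)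
qed

lemma integral_pair_tensor:
  fixes u w :: "real \<Rightarrow> real"
  assumes u: "integrable lborel u" and w: "integrable lborel w"
  shows "(\<integral>z. u (fst z) * w (snd z) \<partial>(lborel \<Otimes>\<^sub>M lborel)) = integral\<^sup>L lborel u * integral\<^sup>L lborel w"
proof -
  have [measurable]: "u \<in> borel_measurable borel" "w \<in> borel_measurable borel"
    using u w by auto
  have int: "integrable (lborel \<Otimes>\<^sub>M lborel) (\<lambda>z. u (fst z) * w (snd z))"
  proof (rule lborel_pair.Fubini_integrable)
    show "integrable lborel (\<lambda>t. \<integral>x. norm (u (fst (t, x)) * w (snd (t, x))) \<partial>lborel)"
      using u by (simp add: abs_mult)
  qed (use w in simp_all)
  have "(\<lambda>z. u (fst z) * w (snd z)) = (\<lambda>(t, x). u t * w x)"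
    by auto
  then show ?thesis
    using lborel_pair.integral_fst[of "\<lambda>t x. u t * w x"] int by simp
qed

lemma set_integral_Times_deriv:
  fixes u \<theta> :: "real \<Rightarrow> real"
  assumes u: "set_integrable lborel A u" and \<theta>: "smooth_fun \<theta>" and "\<alpha> \<le> \<beta>"
  shows "(LINT z:A \<times> {\<alpha><..<\<beta>}|lborel. u (fst z) * deriv \<theta> (snd z)) = (\<theta> \<beta> - \<theta> \<alpha>) * (LINT t:A|lborel. u t)"
proof -
  have "set_integrable lborel {\<alpha><..<\<beta>} (deriv \<theta>)"
    by (rule set_integrable_subset[OF borel_integrable_atLeastAtMost'[of \<alpha> \<beta>]])
       (auto intro: smooth_fun_continuous_on smooth_fun_deriv \<theta>)
  then have "(\<integral>z. (indicator A (fst z) * u (fst z)) * (indicator {\<alpha><..<\<beta>} (snd z) * deriv \<theta> (snd z)) \<partial>(lborel \<Otimes>\<^sub>M lborel))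
      = (LINT t:A|lborel. u t) * (LINT x:{\<alpha><..<\<beta>}|lborel. deriv \<theta> x)"
    using u by (subst integral_pair_tensor) (simp_all add: set_integrable_def set_lebesgue_integral_def)
  then show ?thesis
    using set_integral_deriv_Ioo[OF \<theta> \<open>\<alpha> \<le> \<beta>\<close>]
    by (simp add: set_lebesgue_integral_def lborel_prod[symmetric] indicator_times mult_ac)
qed

lemma set_integral_Times_le_if_sections_le:
  fixes D :: "real \<times> real \<Rightarrow> real"
  assumes D: "set_integrable lborel (A \<times> J) D"
    and J: "J \<in> sets lborel" "emeasure lborel J < \<infinity>"
    and sections: "AE x in lborel. x \<in> J \<longrightarrow> (LINT t:A|lborel. D (t, x)) \<le> \<delta>"
  shows "(LINT z:A \<times> J|lborel. D z) \<le> \<delta> * measure lborel J"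
proof -
  have D': "integrable (lborel \<Otimes>\<^sub>M lborel) (\<lambda>(t, x). indicator (A \<times> J) (t, x) * D (t, x))"
    using D by (simp add: set_integrable_def lborel_prod case_prod_beta')
  have slice: "(\<integral>t. indicator (A \<times> J) (t, x) * D (t, x) \<partial>lborel) =
      indicator J x * (LINT t:A|lborel. D (t, x))" for x
    by (auto simp: set_lebesgue_integral_def indicator_times split: split_indicator)
  have "(LINT z:A \<times> J|lborel. D z) = (\<integral>x. indicator J x * (LINT t:A|lborel. D (t, x)) \<partial>lborel)"
    using lborel_pair.integral_snd[OF D']
    by (simp add: slice case_prod_beta' set_lebesgue_integral_def lborel_prod[symmetric])
  also have "\<dots> \<le> (\<integral>x. \<delta> * indicator J x \<partial>lborel)"
  proof (rule integral_mono_AE)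
    show "integrable lborel (\<lambda>x. indicator J x * (LINT t:A|lborel. D (t, x)))"
      using lborel_pair.integrable_snd[OF D'] by (simp add: slice)
    show "AE x in lborel. indicator J x * (LINT t:A|lborel. D (t, x)) \<le> \<delta> * indicator J x"
      using sections by eventually_elim (auto split: split_indicator)
  qed (use J in auto)
  also have "\<dots> = \<delta> * measure lborel J"
    using J by simp
  finally show ?thesis .
qed

lemma set_integral_eq_on_subset:
  assumes "S \<subseteq> B" "\<And>z. z \<in> B \<Longrightarrow> z \<notin> S \<Longrightarrow> h z = 0"
  shows "(LINT z:B|M. h z) = (LINT z:S|M. h z)"
  unfolding set_lebesgue_integral_def
  by (rule Bochner_Integration.integral_cong) (use assms in \<open>auto split: split_indicator\<close>)

lemma borel_measurable_fst_snd [measurable]: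
  "fst \<in> borel_measurable (borel :: ('a::second_countable_topology \<times> 'b::second_countable_topology) measure)"
  "snd \<in> borel_measurable (borel :: ('a::second_countable_topology \<times> 'b::second_countable_topology) measure)"
  using measurable_fst[of "borel :: 'a measure" "borel :: 'b measure"]
    measurable_snd[of "borel :: 'a measure" "borel :: 'b measure"] by (simp_all add: borel_prod)

lemma AE_lborel_fst:
  assumes "AE t in lborel. P t"
  shows "AE z in (lborel :: ('a::euclidean_space \<times> 'b::euclidean_space) measure). P (fst z)"
proof -
  obtain N where N: "N \<in> null_sets lborel" "{t. \<not> P t} \<subseteq> N"
    using assms by (auto simp: eventually_ae_filter)
  then have "N \<times> UNIV \<in> null_sets (lborel \<Otimes>\<^sub>M (lborel :: 'b measure))"
    by (intro lborel.times_in_null_sets1) auto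
  then show ?thesis
    unfolding lborel_prod[symmetric] by (rule AE_I') (use N(2) in auto)
qed

lemma abs_set_integral_le_if_vanishing:
  fixes h g :: "'a \<Rightarrow> real"
  assumes "S \<subseteq> B" "\<And>z. z \<in> B \<Longrightarrow> z \<notin> S \<Longrightarrow> h z = 0"
    and "set_integrable M S h" "set_integrable M S g" "AE z in M. z \<in> S \<longrightarrow> \<bar>h z\<bar> \<le> g z"
  shows "\<bar>LINT z:B|M. h z\<bar> \<le> (LINT z:S|M. g z)"
proof -
  have "\<bar>LINT z:B|M. h z\<bar> = \<bar>LINT z:S|M. h z\<bar>"
    using set_integral_eq_on_subset[OF assms(1,2)] by simp
  also have "\<dots> \<le> (LINT z:S|M. \<bar>h z\<bar>)"
    using set_integral_norm_bound[OF assms(3)] by simp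
  also have "\<dots> \<le> (LINT z:S|M. g z)"
    using assms(3-5) by (intro set_integral_mono_AE set_integrable_abs) (auto elim!: eventually_mono)
  finally show ?thesis .
qed

context
  fixes T \<alpha> \<beta> a b \<Psi>0 K :: real and f r \<psi> \<theta> :: "real \<Rightarrow> real" and \<rho> :: "real \<times> real \<Rightarrow> real"
  assumes f\<rho>: "Linf_on ({0<..<T} \<times> {\<alpha><..<\<beta>}) (\<lambda>z. f (\<rho> z))" and fr: "Linf_on {0<..<T} (\<lambda>t. f (r t))"
    and \<psi>: "smooth_fun \<psi>" "\<And>t. \<bar>\<psi> t\<bar> \<le> \<Psi>0"
    and \<theta>: "smooth_fun \<theta>" "\<And>x. x \<in> {\<alpha><..<\<beta>} \<Longrightarrow> \<bar>deriv \<theta> x\<bar> \<le> K"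
      "\<And>x. x \<in> {\<alpha><..<\<beta>} \<Longrightarrow> x \<notin> {a<..<b} \<Longrightarrow> deriv \<theta> x = 0"
    and strip: "\<alpha> \<le> a" "a \<le> b" "b \<le> \<beta>" "0 \<le> T" "0 \<le> K"
begin

lemma flux_term_integrable:
  "set_integrable lborel ({0<..<T} \<times> {\<alpha><..<\<beta>}) (\<lambda>z. f (\<rho> z) * \<psi> (fst z) * deriv \<theta> (snd z))"
  "set_integrable lborel ({0<..<T} \<times> {\<alpha><..<\<beta>}) (\<lambda>z. \<psi> (fst z) * f (r (fst z)) * deriv \<theta> (snd z))"
  "set_integrable lborel ({0<..<T} \<times> {a<..<b}) (\<lambda>z. \<bar>f (\<rho> z) - f (r (fst z))\<bar>)"
proof -
  let ?B = "{0<..<T} \<times> {\<alpha><..<\<beta>}" and ?S = "{0<..<T} \<times> {a<..<b}"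
  obtain F1 where F1: "AE z in lborel. z \<in> ?B \<longrightarrow> \<bar>f (\<rho> z)\<bar> \<le> F1" "(\<lambda>z. f (\<rho> z)) \<in> borel_measurable borel"
    using f\<rho> unfolding Linf_on_def by blast
  obtain F2 where F2: "AE t in lborel. t \<in> {0<..<T} \<longrightarrow> \<bar>f (r t)\<bar> \<le> F2" "(\<lambda>t. f (r t)) \<in> borel_measurable borel"
    using fr unfolding Linf_on_def by blast
  have [measurable]: "\<psi> \<in> borel_measurable borel" "deriv \<theta> \<in> borel_measurable borel"
    using \<psi>(1) \<theta>(1) by (simp_all add: smooth_fun_borel_measurable smooth_fun_deriv)
  note [measurable] = F1(2) F2(2)
  have S: "?S \<subseteq> ?B" "?S \<in> sets lborel" "emeasure lborel ?S < \<infinity>" "?B \<in> sets lborel" "emeasure lborel ?B < \<infinity>"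
    using strip by (auto simp: lborel_prod[symmetric] lborel.emeasure_pair_measure_Times ennreal_mult_less_top)
  have \<Psi>0: "0 \<le> \<Psi>0"
    using \<psi>(2)[of 0] by simp
  have Fr: "AE z in lborel. fst z \<in> {0<..<T} \<longrightarrow> \<bar>f (r (fst z))\<bar> \<le> F2"
    by (rule AE_lborel_fst[OF F2(1)])
  show "set_integrable lborel ?B (\<lambda>z. f (\<rho> z) * \<psi> (fst z) * deriv \<theta> (snd z))"
    using F1(1) \<Psi>0 strip(5)
    by (intro set_integrable_bounded[OF S(4,5), where K = "F1 * \<Psi>0 * K"])
       (auto elim!: eventually_mono simp: abs_mult mem_Times_iff intro!: mult_mono \<psi>(2) \<theta>(2))
  show "set_integrable lborel ?B (\<lambda>z. \<psi> (fst z) * f (r (fst z)) * deriv \<theta> (snd z))"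
    using Fr \<Psi>0 strip(5)
    by (intro set_integrable_bounded[OF S(4,5), where K = "\<Psi>0 * F2 * K"])
       (auto elim!: eventually_mono simp: abs_mult mem_Times_iff intro!: mult_mono \<psi>(2) \<theta>(2))
  have "AE z in lborel. z \<in> ?S \<longrightarrow> \<bar>f (\<rho> z) - f (r (fst z))\<bar> \<le> F1 + F2"
    using F1(1) Fr
    by eventually_elim (use S(1) in \<open>auto intro!: order.trans[OF abs_triangle_ineq4] add_mono\<close>)
  then show "set_integrable lborel ?S (\<lambda>z. \<bar>f (\<rho> z) - f (r (fst z))\<bar>)"
    by (intro set_integrable_bounded[OF S(2,3)]) auto
qed

lemma flux_term_estimate:
  assumes near: "AE x in lborel. x \<in> {a<..<b} \<longrightarrow> (LINT t:{0<..<T}|lborel. \<bar>f (\<rho> (t, x)) - f (r t)\<bar>) \<le> \<delta>"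
  shows "\<bar>(LINT z:{0<..<T} \<times> {\<alpha><..<\<beta>}|lborel. f (\<rho> z) * \<psi> (fst z) * deriv \<theta> (snd z))
          - (\<theta> \<beta> - \<theta> \<alpha>) * (LINT t:{0<..<T}|lborel. \<psi> t * f (r t))\<bar> \<le> \<Psi>0 * K * \<delta> * (b - a)"
proof -
  let ?B = "{0<..<T} \<times> {\<alpha><..<\<beta>}" and ?S = "{0<..<T} \<times> {a<..<b}"
  note int = flux_term_integrable
  have S: "?S \<subseteq> ?B" "?S \<in> sets lborel"
    using strip by (auto simp: lborel_prod[symmetric])
  have "set_integrable lborel {0<..<T} (\<lambda>t. \<psi> t * f (r t))"
    using set_integrable_mult_bounded[OF Linf_on_set_integrable[OF fr] smooth_fun_borel_measurable[OF \<psi>(1)] \<psi>(2)]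
      strip(4) by simp
  from set_integral_Times_deriv[OF this \<theta>(1), of \<alpha> \<beta>]
  have "(LINT z:?B|lborel. f (\<rho> z) * \<psi> (fst z) * deriv \<theta> (snd z)) - (\<theta> \<beta> - \<theta> \<alpha>) * (LINT t:{0<..<T}|lborel. \<psi> t * f (r t))
      = (LINT z:?B|lborel. (f (\<rho> z) - f (r (fst z))) * \<psi> (fst z) * deriv \<theta> (snd z))"
    using set_integral_diff(2)[OF int(1,2)] strip by (simp add: algebra_simps)
  also have "\<bar>\<dots>\<bar> \<le> (LINT z:?S|lborel. \<Psi>0 * K * \<bar>f (\<rho> z) - f (r (fst z))\<bar>)"
  proof (rule abs_set_integral_le_if_vanishing[OF S(1)])
    show "set_integrable lborel ?S (\<lambda>z. (f (\<rho> z) - f (r (fst z))) * \<psi> (fst z) * deriv \<theta> (snd z))"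
      using set_integrable_subset[OF set_integral_diff(1)[OF int(1,2)] S(2,1)] by (simp add: algebra_simps)
    have "\<bar>(f (\<rho> z) - f (r (fst z))) * \<psi> (fst z) * deriv \<theta> (snd z)\<bar> \<le> \<Psi>0 * K * \<bar>f (\<rho> z) - f (r (fst z))\<bar>"
      if "z \<in> ?S" for z
    proof -
      have "\<bar>\<psi> (fst z)\<bar> * \<bar>deriv \<theta> (snd z)\<bar> \<le> \<Psi>0 * K"
        using that strip \<psi>(2)[of 0] \<psi>(2)[of "fst z"] \<theta>(2)[of "snd z"] by (intro mult_mono) (auto simp: mem_Times_iff)
      then have "\<bar>f (\<rho> z) - f (r (fst z))\<bar> * (\<bar>\<psi> (fst z)\<bar> * \<bar>deriv \<theta> (snd z)\<bar>)
          \<le> \<bar>f (\<rho> z) - f (r (fst z))\<bar> * (\<Psi>0 * K)"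
        by (rule mult_left_mono) simp
      then show ?thesis
        by (simp add: abs_mult mult_ac)
    qed
    then show "AE z in lborel. z \<in> ?S \<longrightarrow> \<bar>(f (\<rho> z) - f (r (fst z))) * \<psi> (fst z) * deriv \<theta> (snd z)\<bar>
        \<le> \<Psi>0 * K * \<bar>f (\<rho> z) - f (r (fst z))\<bar>"
      by simp
  qed (use int(3) \<theta>(3) in \<open>auto simp: mem_Times_iff\<close>)
  also have "\<dots> = \<Psi>0 * K * (LINT z:?S|lborel. \<bar>f (\<rho> z) - f (r (fst z))\<bar>)"
    by simp
  also have "\<dots> \<le> \<Psi>0 * K * (\<delta> * (b - a))"
    using set_integral_Times_le_if_sections_le[OF int(3)] near strip \<psi>(2)[of 0]
    by (intro mult_left_mono) auto
  finally show ?thesis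
    by (simp add: mult_ac)
qed

end

lemma flux_cutoff_estimate:
  fixes \<rho> :: "real \<times> real \<Rightarrow> real" and f r \<psi> \<theta> :: "real \<Rightarrow> real"
  assumes \<rho>: "\<rho> \<in> borel_measurable borel" "AE z in lborel. z \<in> {0<..<T} \<times> {\<alpha><..<\<beta>} \<longrightarrow> \<bar>\<rho> z\<bar> \<le> M"
    and f\<rho>: "Linf_on ({0<..<T} \<times> {\<alpha><..<\<beta>}) (\<lambda>z. f (\<rho> z))" and fr: "Linf_on {0<..<T} (\<lambda>t. f (r t))"
    and \<psi>: "smooth_fun \<psi>" "\<And>t. \<bar>\<psi> t\<bar> \<le> \<Psi>0" "\<And>t. \<bar>deriv \<psi> t\<bar> \<le> \<Psi>1"
    and \<theta>: "smooth_fun \<theta>" "\<And>x. x \<in> {\<alpha><..<\<beta>} \<Longrightarrow> \<bar>\<theta> x\<bar> \<le> 1"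
      "\<And>x. x \<in> {\<alpha><..<\<beta>} \<Longrightarrow> \<bar>deriv \<theta> x\<bar> \<le> K"
      "\<And>x. x \<in> {\<alpha><..<\<beta>} \<Longrightarrow> x \<notin> {a<..<b} \<Longrightarrow> \<theta> x = 0 \<and> deriv \<theta> x = 0"
    and strip: "\<alpha> \<le> a" "a \<le> b" "b \<le> \<beta>" "0 \<le> T" "0 \<le> M" "0 \<le> K"
    and near: "AE x in lborel. x \<in> {a<..<b} \<longrightarrow> (LINT t:{0<..<T}|lborel. \<bar>f (\<rho> (t, x)) - f (r t)\<bar>) \<le> \<delta>"
  shows "\<bar>(LINT z:{0<..<T} \<times> {\<alpha><..<\<beta>}|lborel.
            \<rho> z * deriv \<psi> (fst z) * \<theta> (snd z) + f (\<rho> z) * \<psi> (fst z) * deriv \<theta> (snd z))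
          - (\<theta> \<beta> - \<theta> \<alpha>) * (LINT t:{0<..<T}|lborel. \<psi> t * f (r t))\<bar>
         \<le> (M * \<Psi>1 * T + \<Psi>0 * K * \<delta>) * (b - a)"
proof -
  let ?B = "{0<..<T} \<times> {\<alpha><..<\<beta>}" and ?S = "{0<..<T} \<times> {a<..<b}"
  have S: "?S \<subseteq> ?B" "?S \<in> sets lborel" "emeasure lborel ?S < \<infinity>" "?B \<in> sets lborel"
    "emeasure lborel ?B < \<infinity>" "measure lborel ?S = T * (b - a)"
    using strip by (auto simp: lborel_prod[symmetric] lborel.emeasure_pair_measure_Times
        ennreal_mult_less_top measure_def enn2real_mult)
  have [measurable]: "deriv \<psi> \<in> borel_measurable borel" "\<psi> \<in> borel_measurable borel"
    "\<theta> \<in> borel_measurable borel" "deriv \<theta> \<in> borel_measurable borel"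
    using \<psi>(1) \<theta>(1) by (simp_all add: smooth_fun_borel_measurable smooth_fun_deriv)
  obtain F where F: "AE z in lborel. z \<in> ?B \<longrightarrow> \<bar>f (\<rho> z)\<bar> \<le> F" "(\<lambda>z. f (\<rho> z)) \<in> borel_measurable borel"
    using f\<rho> unfolding Linf_on_def by blast
  note [measurable] = \<rho>(1) F(2)
  have \<Psi>: "0 \<le> \<Psi>0" "0 \<le> \<Psi>1"
    using \<psi>(2,3)[of 0] by auto
  have bound1: "\<bar>\<rho> z * deriv \<psi> (fst z) * \<theta> (snd z)\<bar> \<le> M * \<Psi>1"
    if "z \<in> ?B" "\<bar>\<rho> z\<bar> \<le> M" for z
  proof -
    have "\<bar>\<rho> z\<bar> * \<bar>deriv \<psi> (fst z)\<bar> \<le> M * \<Psi>1"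
      by (rule mult_mono[OF that(2) \<psi>(3) strip(5) abs_ge_zero])
    moreover have "\<bar>\<theta> (snd z)\<bar> \<le> 1"
      using \<theta>(2) that(1) by (auto simp: mem_Times_iff)
    ultimately have "\<bar>\<rho> z\<bar> * \<bar>deriv \<psi> (fst z)\<bar> * \<bar>\<theta> (snd z)\<bar> \<le> M * \<Psi>1 * 1"
      using strip(5) \<Psi> by (intro mult_mono[where b = "M * \<Psi>1"]) simp_all
    then show ?thesis
      by (simp add: abs_mult)
  qed
  have int1: "set_integrable lborel ?B (\<lambda>z. \<rho> z * deriv \<psi> (fst z) * \<theta> (snd z))"
    using \<rho>(2) by (intro set_integrable_bounded[OF S(4,5)]) (auto elim!: eventually_mono intro: bound1)
  have "\<bar>LINT z:?B|lborel. \<rho> z * deriv \<psi> (fst z) * \<theta> (snd z)\<bar> \<le> (LINT z:?S|lborel. M * \<Psi>1)"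
  proof (rule abs_set_integral_le_if_vanishing[OF S(1)])
    show "set_integrable lborel ?S (\<lambda>z. M * \<Psi>1)"
      by (rule set_integrable_bounded[OF S(2,3), where K = "M * \<Psi>1"]) (use strip \<Psi> in auto)
    show "AE z in lborel. z \<in> ?S \<longrightarrow> \<bar>\<rho> z * deriv \<psi> (fst z) * \<theta> (snd z)\<bar> \<le> M * \<Psi>1"
      using \<rho>(2) by eventually_elim (use S(1) bound1 in blast)
  qed (use \<theta>(4) set_integrable_subset[OF int1 S(2,1)] in \<open>auto simp: mem_Times_iff\<close>)
  also have "\<dots> = M * \<Psi>1 * (T * (b - a))"
    using S(2,3,6) by (simp add: set_integral_const less_top)
  finally have E1: "\<bar>LINT z:?B|lborel. \<rho> z * deriv \<psi> (fst z) * \<theta> (snd z)\<bar> \<le> M * \<Psi>1 * (T * (b - a))" .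
  have \<theta>': "deriv \<theta> x = 0" if "x \<in> {\<alpha><..<\<beta>}" "x \<notin> {a<..<b}" for x
    using \<theta>(4)[OF that] by simp
  note int2 = flux_term_integrable(1)[where f = f and \<rho> = \<rho> and r = r, OF f\<rho> fr \<psi>(1,2) \<theta>(1,3) \<theta>' strip(1-4,6)]
  have E2: "\<bar>(LINT z:?B|lborel. f (\<rho> z) * \<psi> (fst z) * deriv \<theta> (snd z))
      - (\<theta> \<beta> - \<theta> \<alpha>) * (LINT t:{0<..<T}|lborel. \<psi> t * f (r t))\<bar> \<le> \<Psi>0 * K * \<delta> * (b - a)"
    by (rule flux_term_estimate[where f = f and \<rho> = \<rho> and r = r, OF f\<rho> fr \<psi>(1,2) \<theta>(1,3) \<theta>' strip(1-4,6) near])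
  have "(M * \<Psi>1 * T + \<Psi>0 * K * \<delta>) * (b - a) = M * \<Psi>1 * (T * (b - a)) + \<Psi>0 * K * \<delta> * (b - a)"
    by (simp add: algebra_simps)
  with E1 E2 set_integral_add(2)[OF int1 int2] show ?thesis
    by (smt (verit))
qed

lemma weak_traces_tensor:
  assumes weak: "weak_traces v T \<alpha> \<beta> \<rho> Tra Trb \<rho>0"
    and \<psi>: "smooth_fun \<psi>" "0 < c" "d < T" "\<And>t. t \<notin> {c..d} \<Longrightarrow> \<psi> t = 0"
    and \<theta>: "smooth_fun \<theta>" "\<And>x. x \<notin> {e..f} \<Longrightarrow> \<theta> x = 0"
  shows "(LINT z:{0<..<T} \<times> {\<alpha><..<\<beta>}|lborel.
            \<rho> z * deriv \<psi> (fst z) * \<theta> (snd z) + v (\<rho> z) * \<rho> z * \<psi> (fst z) * deriv \<theta> (snd z))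
       = \<theta> \<alpha> * (LINT t:{0<..<T}|lborel. \<psi> t * Tra t) + \<theta> \<beta> * (LINT t:{0<..<T}|lborel. \<psi> t * Trb t)"
proof -
  have "test_fun ({..<T} \<times> UNIV) (tensor \<psi> \<theta>)"
    by (rule test_fun_tensor[OF \<psi>(1) \<theta>(1) \<psi>(4) \<theta>(2)]) (use \<psi>(3) in auto)
  then have "(LINT z:{0<..<T} \<times> {\<alpha><..<\<beta>}|lborel. \<rho> z * (pdt (tensor \<psi> \<theta>) z + v (\<rho> z) * pdx (tensor \<psi> \<theta>) z))
      = (LINT t:{0<..<T}|lborel. tensor \<psi> \<theta> (t, \<alpha>) * Tra t)
      + (LINT t:{0<..<T}|lborel. tensor \<psi> \<theta> (t, \<beta>) * Trb t)
      - (LINT x:{\<alpha><..<\<beta>}|lborel. \<rho>0 x * tensor \<psi> \<theta> (0, x))"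
    using weak unfolding weak_traces_def by blast
  moreover have "(LINT t:{0<..<T}|lborel. tensor \<psi> \<theta> (t, y) * g t) = \<theta> y * (LINT t:{0<..<T}|lborel. \<psi> t * g t)"
    for y and g :: "real \<Rightarrow> real"
    by (simp add: tensor_def mult_ac set_integral_mult_right[symmetric])
  moreover have "\<psi> 0 = 0"
    using \<psi>(2,4) by simp
  ultimately show ?thesis
    by (simp add: pdt_tensor[OF \<psi>(1)] pdx_tensor[OF \<theta>(1)] tensor_def algebra_simps)
qed

lemma eq_0_if_abs_le_approx:
  fixes Z P Q :: real
  assumes "0 \<le> P" "0 \<le> Q"
    and approx: "\<And>\<delta>. 0 < \<delta> \<Longrightarrow> \<exists>\<epsilon>0>0. \<forall>\<epsilon>. 0 < \<epsilon> \<longrightarrow> \<epsilon> \<le> \<epsilon>0 \<longrightarrow> \<bar>Z\<bar> \<le> P * \<epsilon> + Q * \<delta>"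
  shows "Z = 0"
proof (rule ccontr)
  assume "Z \<noteq> 0"
  define \<delta> where "\<delta> = \<bar>Z\<bar> / (2 * (Q + 1))"
  have "0 < \<delta>"
    using \<open>Z \<noteq> 0\<close> assms(2) by (simp add: \<delta>_def)
  then obtain \<epsilon>0 where "0 < \<epsilon>0" and \<epsilon>0: "\<And>\<epsilon>. 0 < \<epsilon> \<Longrightarrow> \<epsilon> \<le> \<epsilon>0 \<Longrightarrow> \<bar>Z\<bar> \<le> P * \<epsilon> + Q * \<delta>"
    using approx by blast
  define \<epsilon> where "\<epsilon> = min \<epsilon>0 (\<bar>Z\<bar> / (2 * (P + 1)))"
  have "0 < \<epsilon>"
    using \<open>0 < \<epsilon>0\<close> \<open>Z \<noteq> 0\<close> assms(1) by (simp add: \<epsilon>_def)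
  have "P * \<epsilon> < \<bar>Z\<bar> / 2"
  proof -
    have "P * \<epsilon> \<le> P * (\<bar>Z\<bar> / (2 * (P + 1)))"
      using assms(1) by (intro mult_left_mono) (auto simp: \<epsilon>_def)
    also have "\<dots> < \<bar>Z\<bar> / 2"
      using assms(1) \<open>Z \<noteq> 0\<close> by (simp add: field_simps)
    finally show ?thesis .
  qed
  moreover have "Q * \<delta> < \<bar>Z\<bar> / 2"
    using assms(2) \<open>Z \<noteq> 0\<close> by (simp add: \<delta>_def field_simps)
  ultimately show False
    using \<epsilon>0[OF \<open>0 < \<epsilon>\<close>] by (simp add: \<epsilon>_def)
qed

context
  fixes \<alpha> \<beta> T :: real and v :: "real \<Rightarrow> real" and \<rho> :: "real \<times> real \<Rightarrow> real"
    and Tra Trb \<rho>0 :: "real \<Rightarrow> real"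
  assumes \<alpha>\<beta>: "\<alpha> < \<beta>" and T: "0 < T" and v: "continuous_on UNIV v"
    and \<rho>: "Linf_on ({0<..<T} \<times> {\<alpha><..<\<beta>}) \<rho>"
    and weak: "weak_traces v T \<alpha> \<beta> \<rho> Tra Trb \<rho>0"
begin

lemma cutoff_pairing_estimate:
  assumes M: "AE z in lborel. z \<in> {0<..<T} \<times> {\<alpha><..<\<beta>} \<longrightarrow> \<bar>\<rho> z\<bar> \<le> M" "0 \<le> M"
    and \<psi>: "smooth_fun \<psi>" "0 < c" "d < T" "\<And>t. t \<notin> {c..d} \<Longrightarrow> \<psi> t = 0"
      "\<And>t. \<bar>\<psi> t\<bar> \<le> \<Psi>0" "\<And>t. \<bar>deriv \<psi> t\<bar> \<le> \<Psi>1"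
    and \<theta>: "smooth_fun \<theta>" "\<And>x. x \<notin> {e..f} \<Longrightarrow> \<theta> x = 0"
      "\<And>x. x \<in> {\<alpha><..<\<beta>} \<Longrightarrow> \<bar>\<theta> x\<bar> \<le> 1" "\<And>x. x \<in> {\<alpha><..<\<beta>} \<Longrightarrow> \<bar>deriv \<theta> x\<bar> \<le> K"
      "\<And>x. x \<in> {\<alpha><..<\<beta>} \<Longrightarrow> x \<notin> {a<..<b} \<Longrightarrow> \<theta> x = 0 \<and> deriv \<theta> x = 0" "0 \<le> K"
    and strip: "\<alpha> \<le> a" "a \<le> b" "b \<le> \<beta>"
    and r: "Linf_on {0<..<T} r"
    and near: "AE x in lborel. x \<in> {a<..<b} \<longrightarrow>
      (LINT t:{0<..<T}|lborel. \<bar>v (\<rho> (t, x)) * \<rho> (t, x) - v (r t) * r t\<bar>) \<le> \<delta>"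
  shows "\<bar>\<theta> \<alpha> * (LINT t:{0<..<T}|lborel. \<psi> t * Tra t) + \<theta> \<beta> * (LINT t:{0<..<T}|lborel. \<psi> t * Trb t)
      - (\<theta> \<beta> - \<theta> \<alpha>) * (LINT t:{0<..<T}|lborel. \<psi> t * (v (r t) * r t))\<bar>
    \<le> (M * \<Psi>1 * T + \<Psi>0 * K * \<delta>) * (b - a)"
proof -
  have flux: "continuous_on UNIV (\<lambda>u. v u * u)"
    by (intro continuous_intros v)
  have "\<rho> \<in> borel_measurable borel"
    using \<rho> unfolding Linf_on_def by blast
  from flux_cutoff_estimate[where f = "\<lambda>u. v u * u", OF this M(1) Linf_on_compose[OF flux \<rho>]
      Linf_on_compose[OF flux r] \<psi>(1,5,6) \<theta>(1,3,4,5) strip _ M(2) \<theta>(6) near]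
  show ?thesis
    using weak_traces_tensor[OF weak \<psi>(1-4) \<theta>(1,2)] T by simp
qed

lemma trace_pairing_from_cutoffs:
  fixes \<theta> :: "real \<Rightarrow> real \<Rightarrow> real" and a :: "real \<Rightarrow> real"
  assumes \<psi>: "smooth_fun \<psi>" "0 < c" "d < T" "\<And>t. t \<notin> {c..d} \<Longrightarrow> \<psi> t = 0"
    and r: "Linf_on {0<..<T} r" and "0 < \<epsilon>1" "0 \<le> C"
    and \<theta>: "\<And>\<epsilon>. 0 < \<epsilon> \<Longrightarrow> \<epsilon> \<le> \<epsilon>1 \<Longrightarrow>
        smooth_fun (\<theta> \<epsilon>) \<and> \<theta> \<epsilon> \<alpha> = k\<alpha> \<and> \<theta> \<epsilon> \<beta> = k\<beta> \<and> \<alpha> \<le> a \<epsilon> \<and> a \<epsilon> + 2 * \<epsilon> \<le> \<beta>"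
      "\<And>\<epsilon> x. 0 < \<epsilon> \<Longrightarrow> \<epsilon> \<le> \<epsilon>1 \<Longrightarrow> x \<notin> {\<alpha> - 2..\<beta> + 2} \<Longrightarrow> \<theta> \<epsilon> x = 0"
      "\<And>\<epsilon> x. 0 < \<epsilon> \<Longrightarrow> \<epsilon> \<le> \<epsilon>1 \<Longrightarrow> \<bar>\<theta> \<epsilon> x\<bar> \<le> 1 \<and> \<bar>deriv (\<theta> \<epsilon>) x\<bar> \<le> C / \<epsilon>"
      "\<And>\<epsilon> x. 0 < \<epsilon> \<Longrightarrow> \<epsilon> \<le> \<epsilon>1 \<Longrightarrow> x \<in> {\<alpha><..<\<beta>} \<Longrightarrow> x \<notin> {a \<epsilon><..<a \<epsilon> + 2 * \<epsilon>} \<Longrightarrow>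
        \<theta> \<epsilon> x = 0 \<and> deriv (\<theta> \<epsilon>) x = 0"
    and near: "\<And>\<delta>. 0 < \<delta> \<Longrightarrow> \<exists>\<epsilon>0>0. \<forall>\<epsilon>. 0 < \<epsilon> \<longrightarrow> \<epsilon> \<le> \<epsilon>0 \<longrightarrow> (AE x in lborel. x \<in> {a \<epsilon><..<a \<epsilon> + 2 * \<epsilon>} \<longrightarrow>
        (LINT t:{0<..<T}|lborel. \<bar>v (\<rho> (t, x)) * \<rho> (t, x) - v (r t) * r t\<bar>) \<le> \<delta>)"
  shows "k\<alpha> * (LINT t:{0<..<T}|lborel. \<psi> t * Tra t) + k\<beta> * (LINT t:{0<..<T}|lborel. \<psi> t * Trb t)
      = (k\<beta> - k\<alpha>) * (LINT t:{0<..<T}|lborel. \<psi> t * (v (r t) * r t))"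
proof -
  let ?Z = "k\<alpha> * (LINT t:{0<..<T}|lborel. \<psi> t * Tra t) + k\<beta> * (LINT t:{0<..<T}|lborel. \<psi> t * Trb t)
      - (k\<beta> - k\<alpha>) * (LINT t:{0<..<T}|lborel. \<psi> t * (v (r t) * r t))"
  obtain M where M: "AE z in lborel. z \<in> {0<..<T} \<times> {\<alpha><..<\<beta>} \<longrightarrow> \<bar>\<rho> z\<bar> \<le> M" "0 \<le> M"
    using Linf_on_bound[OF \<rho>] by blast
  obtain \<Psi>0 \<Psi>1 where \<Psi>: "\<And>t. \<bar>\<psi> t\<bar> \<le> \<Psi>0" "\<And>t. \<bar>deriv \<psi> t\<bar> \<le> \<Psi>1"
    using smooth_fun_bounds[OF \<psi>(1,4)] by blast
  have "?Z = 0"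
  proof (rule eq_0_if_abs_le_approx[of "2 * (M * \<Psi>1 * T)" "2 * (\<Psi>0 * C)"])
    show "0 \<le> 2 * (M * \<Psi>1 * T)" "0 \<le> 2 * (\<Psi>0 * C)"
      using \<Psi>[of 0] M(2) T \<open>0 \<le> C\<close> by auto
    fix \<delta> :: real
    assume "0 < \<delta>"
    then obtain \<epsilon>0 where "0 < \<epsilon>0" and \<epsilon>0: "\<And>\<epsilon>. 0 < \<epsilon> \<Longrightarrow> \<epsilon> \<le> \<epsilon>0 \<Longrightarrow> AE x in lborel. x \<in> {a \<epsilon><..<a \<epsilon> + 2 * \<epsilon>} \<longrightarrow>
        (LINT t:{0<..<T}|lborel. \<bar>v (\<rho> (t, x)) * \<rho> (t, x) - v (r t) * r t\<bar>) \<le> \<delta>"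
      using near by blast
    show "\<exists>\<epsilon>0>0. \<forall>\<epsilon>. 0 < \<epsilon> \<longrightarrow> \<epsilon> \<le> \<epsilon>0 \<longrightarrow> \<bar>?Z\<bar> \<le> 2 * (M * \<Psi>1 * T) * \<epsilon> + 2 * (\<Psi>0 * C) * \<delta>"
    proof (intro exI[of _ "min \<epsilon>0 \<epsilon>1"] conjI allI impI)
      fix \<epsilon> :: real
      assume \<epsilon>: "0 < \<epsilon>" "\<epsilon> \<le> min \<epsilon>0 \<epsilon>1"
      then have "\<bar>\<theta> \<epsilon> \<alpha> * (LINT t:{0<..<T}|lborel. \<psi> t * Tra t) + \<theta> \<epsilon> \<beta> * (LINT t:{0<..<T}|lborel. \<psi> t * Trb t)
          - (\<theta> \<epsilon> \<beta> - \<theta> \<epsilon> \<alpha>) * (LINT t:{0<..<T}|lborel. \<psi> t * (v (r t) * r t))\<bar>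
          \<le> (M * \<Psi>1 * T + \<Psi>0 * (C / \<epsilon>) * \<delta>) * (a \<epsilon> + 2 * \<epsilon> - a \<epsilon>)"
        using \<theta>(1)[of \<epsilon>] \<theta>(3)[of \<epsilon>] \<theta>(4)[of \<epsilon>] \<open>0 \<le> C\<close>
        by (intro cutoff_pairing_estimate[OF M \<psi> \<Psi>, of "\<theta> \<epsilon>" "\<alpha> - 2" "\<beta> + 2" "C / \<epsilon>"]
            \<theta>(2) r \<epsilon>0) auto
      moreover have "(M * \<Psi>1 * T + \<Psi>0 * (C / \<epsilon>) * \<delta>) * (a \<epsilon> + 2 * \<epsilon> - a \<epsilon>) =
          2 * (M * \<Psi>1 * T) * \<epsilon> + 2 * (\<Psi>0 * C) * \<delta>"
        using \<epsilon>(1) by (simp add: field_simps)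
      ultimately show "\<bar>?Z\<bar> \<le> 2 * (M * \<Psi>1 * T) * \<epsilon> + 2 * (\<Psi>0 * C) * \<delta>"
        using \<theta>(1) \<epsilon> by simp
    qed (use \<open>0 < \<epsilon>0\<close> \<open>0 < \<epsilon>1\<close> in simp)
  qed
  then show ?thesis
    by simp
qed

lemma left_trace_pairing:
  assumes strong: "strong_trace_left v T \<alpha> \<beta> \<rho> \<rho>a"
    and \<psi>: "smooth_fun \<psi>" "0 < c" "d < T" "\<And>t. t \<notin> {c..d} \<Longrightarrow> \<psi> t = 0"
  shows "(LINT t:{0<..<T}|lborel. \<psi> t * Tra t) = - (LINT t:{0<..<T}|lborel. \<psi> t * (v (\<rho>a t) * \<rho>a t))"
proof -
  obtain C where C: "0 < C" "\<And>a b \<epsilon> x. 0 < \<epsilon> \<Longrightarrow> \<bar>deriv (plateau a b \<epsilon>) x\<bar> \<le> C / \<epsilon>"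
    using plateau_deriv_bounded by blast
  have "1 * (LINT t:{0<..<T}|lborel. \<psi> t * Tra t) + 0 * (LINT t:{0<..<T}|lborel. \<psi> t * Trb t)
      = (0 - 1) * (LINT t:{0<..<T}|lborel. \<psi> t * (v (\<rho>a t) * \<rho>a t))"
  proof (rule trace_pairing_from_cutoffs[where \<theta> = "plateau (\<alpha> - 1) \<alpha>" and a = "\<lambda>_. \<alpha>",
        OF \<psi> _ _ less_imp_le[OF C(1)], of _ "min 1 ((\<beta> - \<alpha>) / 2)"])
    fix \<epsilon> x :: real
    assume \<epsilon>: "0 < \<epsilon>" "\<epsilon> \<le> min 1 ((\<beta> - \<alpha>) / 2)"
    show "smooth_fun (plateau (\<alpha> - 1) \<alpha> \<epsilon>) \<and> plateau (\<alpha> - 1) \<alpha> \<epsilon> \<alpha> = 1 \<and> plateau (\<alpha> - 1) \<alpha> \<epsilon> \<beta> = 0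
        \<and> \<alpha> \<le> \<alpha> \<and> \<alpha> + 2 * \<epsilon> \<le> \<beta>"
      using \<epsilon> by (auto simp: smooth_fun_plateau plateau_eq_1 plateau_eq_0)
    show "x \<notin> {\<alpha> - 2..\<beta> + 2} \<Longrightarrow> plateau (\<alpha> - 1) \<alpha> \<epsilon> x = 0"
      using \<epsilon> \<alpha>\<beta> by (intro plateau_eq_0) auto
    show "\<bar>plateau (\<alpha> - 1) \<alpha> \<epsilon> x\<bar> \<le> 1 \<and> \<bar>deriv (plateau (\<alpha> - 1) \<alpha> \<epsilon>) x\<bar> \<le> C / \<epsilon>"
      using \<epsilon> C(2) plateau_bounds[of "\<alpha> - 1" \<alpha> \<epsilon> x] by simp
    show "x \<in> {\<alpha><..<\<beta>} \<Longrightarrow> x \<notin> {\<alpha><..<\<alpha> + 2 * \<epsilon>} \<Longrightarrow>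
        plateau (\<alpha> - 1) \<alpha> \<epsilon> x = 0 \<and> deriv (plateau (\<alpha> - 1) \<alpha> \<epsilon>) x = 0"
      using \<epsilon> by (intro plateau_vanishing_right) auto
  next
    fix \<delta> :: real
    assume "0 < \<delta>"
    then obtain \<delta>0 where "0 < \<delta>0" and \<delta>0: "AE y in lborel. \<alpha> < y \<and> y < \<alpha> + \<delta>0 \<and> y < \<beta> \<longrightarrow>
        (LINT t:{0<..<T}|lborel. \<bar>v (\<rho> (t, y)) * \<rho> (t, y) - v (\<rho>a t) * \<rho>a t\<bar>) < \<delta>"
      using strong unfolding strong_trace_left_def by blast
    show "\<exists>\<epsilon>0>0. \<forall>\<epsilon>. 0 < \<epsilon> \<longrightarrow> \<epsilon> \<le> \<epsilon>0 \<longrightarrow> (AE x in lborel. x \<in> {\<alpha><..<\<alpha> + 2 * \<epsilon>} \<longrightarrow>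
        (LINT t:{0<..<T}|lborel. \<bar>v (\<rho> (t, x)) * \<rho> (t, x) - v (\<rho>a t) * \<rho>a t\<bar>) \<le> \<delta>)"
      using \<open>0 < \<delta>0\<close> \<delta>0 \<alpha>\<beta>
      by (intro exI[of _ "min (\<delta>0 / 2) ((\<beta> - \<alpha>) / 2)"]) (auto elim!: eventually_mono)
  qed (use strong \<alpha>\<beta> in \<open>auto simp: strong_trace_left_def\<close>)
  then show ?thesis
    by simp
qed

lemma right_trace_pairing:
  assumes strong: "strong_trace_right v T \<alpha> \<beta> \<rho> \<rho>b"
    and \<psi>: "smooth_fun \<psi>" "0 < c" "d < T" "\<And>t. t \<notin> {c..d} \<Longrightarrow> \<psi> t = 0"
  shows "(LINT t:{0<..<T}|lborel. \<psi> t * Trb t) = (LINT t:{0<..<T}|lborel. \<psi> t * (v (\<rho>b t) * \<rho>b t))"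
proof -
  obtain C where C: "0 < C" "\<And>a b \<epsilon> x. 0 < \<epsilon> \<Longrightarrow> \<bar>deriv (plateau a b \<epsilon>) x\<bar> \<le> C / \<epsilon>"
    using plateau_deriv_bounded by blast
  have "0 * (LINT t:{0<..<T}|lborel. \<psi> t * Tra t) + 1 * (LINT t:{0<..<T}|lborel. \<psi> t * Trb t)
      = (1 - 0) * (LINT t:{0<..<T}|lborel. \<psi> t * (v (\<rho>b t) * \<rho>b t))"
  proof (rule trace_pairing_from_cutoffs[where \<theta> = "plateau \<beta> (\<beta> + 1)" and a = "\<lambda>\<epsilon>. \<beta> - 2 * \<epsilon>",
        OF \<psi> _ _ less_imp_le[OF C(1)], of _ "min 1 ((\<beta> - \<alpha>) / 2)"])
    fix \<epsilon> x :: real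
    assume \<epsilon>: "0 < \<epsilon>" "\<epsilon> \<le> min 1 ((\<beta> - \<alpha>) / 2)"
    show "smooth_fun (plateau \<beta> (\<beta> + 1) \<epsilon>) \<and> plateau \<beta> (\<beta> + 1) \<epsilon> \<alpha> = 0 \<and> plateau \<beta> (\<beta> + 1) \<epsilon> \<beta> = 1
        \<and> \<alpha> \<le> \<beta> - 2 * \<epsilon> \<and> \<beta> - 2 * \<epsilon> + 2 * \<epsilon> \<le> \<beta>"
      using \<epsilon> by (auto simp: smooth_fun_plateau plateau_eq_1 plateau_eq_0)
    show "x \<notin> {\<alpha> - 2..\<beta> + 2} \<Longrightarrow> plateau \<beta> (\<beta> + 1) \<epsilon> x = 0"
      using \<epsilon> \<alpha>\<beta> by (intro plateau_eq_0) auto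
    show "\<bar>plateau \<beta> (\<beta> + 1) \<epsilon> x\<bar> \<le> 1 \<and> \<bar>deriv (plateau \<beta> (\<beta> + 1) \<epsilon>) x\<bar> \<le> C / \<epsilon>"
      using \<epsilon> C(2) plateau_bounds[of \<beta> "\<beta> + 1" \<epsilon> x] by simp
    show "x \<in> {\<alpha><..<\<beta>} \<Longrightarrow> x \<notin> {\<beta> - 2 * \<epsilon><..<\<beta> - 2 * \<epsilon> + 2 * \<epsilon>} \<Longrightarrow>
        plateau \<beta> (\<beta> + 1) \<epsilon> x = 0 \<and> deriv (plateau \<beta> (\<beta> + 1) \<epsilon>) x = 0"
      using \<epsilon> by (intro plateau_vanishing_left) auto
  next
    fix \<delta> :: real
    assume "0 < \<delta>"
    then obtain \<delta>0 where "0 < \<delta>0" and \<delta>0: "AE y in lborel. \<beta> - \<delta>0 < y \<and> y < \<beta> \<and> \<alpha> < y \<longrightarrow>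
        (LINT t:{0<..<T}|lborel. \<bar>v (\<rho> (t, y)) * \<rho> (t, y) - v (\<rho>b t) * \<rho>b t\<bar>) < \<delta>"
      using strong unfolding strong_trace_right_def by blast
    show "\<exists>\<epsilon>0>0. \<forall>\<epsilon>. 0 < \<epsilon> \<longrightarrow> \<epsilon> \<le> \<epsilon>0 \<longrightarrow> (AE x in lborel. x \<in> {\<beta> - 2 * \<epsilon><..<\<beta> - 2 * \<epsilon> + 2 * \<epsilon>} \<longrightarrow>
        (LINT t:{0<..<T}|lborel. \<bar>v (\<rho> (t, x)) * \<rho> (t, x) - v (\<rho>b t) * \<rho>b t\<bar>) \<le> \<delta>)"
      using \<open>0 < \<delta>0\<close> \<delta>0 \<alpha>\<beta>
      by (intro exI[of _ "min (\<delta>0 / 2) ((\<beta> - \<alpha>) / 2)"]) (auto elim!: eventually_mono)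
  qed (use strong \<alpha>\<beta> in \<open>auto simp: strong_trace_right_def\<close>)
  then show ?thesis
    by simp
qed

end

theorem lemma2p13:
  fixes \<alpha> \<beta> T :: real and v :: "real \<Rightarrow> real" and \<rho> :: "real \<times> real \<Rightarrow> real"
    and \<rho>a \<rho>b Tra Trb \<rho>0 :: "real \<Rightarrow> real"
  assumes "\<alpha> < \<beta>" and "0 < T"
    and "v C1_differentiable_on UNIV"
    and "Linf_on ({0<..<T} \<times> {\<alpha><..<\<beta>}) \<rho>"
    and "entropy_sol v T \<alpha> \<beta> \<rho>"
    and "strong_trace_left v T \<alpha> \<beta> \<rho> \<rho>a"
    and "strong_trace_right v T \<alpha> \<beta> \<rho> \<rho>b"
    and "weak_traces v T \<alpha> \<beta> \<rho> Tra Trb \<rho>0"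
  shows "AE t in lborel. t \<in> {0<..<T} \<longrightarrow>
           v (\<rho>a t) * \<rho>a t = - Tra t \<and> v (\<rho>b t) * \<rho>b t = Trb t"
proof -
  have v: "continuous_on UNIV v"
    using assms(3) by (rule C1_differentiable_imp_continuous_on)
  have flux: "continuous_on UNIV (\<lambda>u. v u * u)" "continuous_on UNIV (\<lambda>u. - (v u * u))"
    by (intro continuous_intros v)+
  have integrable: "set_integrable lborel {0<..<T} Tra" "set_integrable lborel {0<..<T} Trb"
    "set_integrable lborel {0<..<T} (\<lambda>t. - (v (\<rho>a t) * \<rho>a t))"
    "set_integrable lborel {0<..<T} (\<lambda>t. v (\<rho>b t) * \<rho>b t)"
    using assms(2,6-8) Linf_on_compose[OF flux(2)] Linf_on_compose[OF flux(1)]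
    unfolding weak_traces_def strong_trace_left_def strong_trace_right_def
    by (auto intro!: Linf_on_set_integrable)
  have "AE t in lborel. t \<in> {0<..<T} \<longrightarrow> Tra t = - (v (\<rho>a t) * \<rho>a t)"
    using left_trace_pairing[OF assms(1,2) v assms(4,8,6)]
    by (intro AE_eq_if_smooth_integrals_eq[OF integrable(1,3)]) (simp add: set_lebesgue_integral_def)
  moreover have "AE t in lborel. t \<in> {0<..<T} \<longrightarrow> Trb t = v (\<rho>b t) * \<rho>b t"
    using right_trace_pairing[OF assms(1,2) v assms(4,8,7)]
    by (intro AE_eq_if_smooth_integrals_eq[OF integrable(2,4)]) simp
  ultimately show ?thesis
    by eventually_elim auto
qed

end
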